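(* Let $L$ be a geometric lattice of rank $r+1$ with linearly ordered atoms, let $B_1,\dots,B_m$ be its nbc-bases in lexicographic order, and let $\Delta_j$ be as defined in the context. Then for $2\le j\le m$, $\Delta_j$ is homeomorphic to a closed $(r-1)$-dimensional ball.
   Context: A geometric lattice is a finite graded atomic lattice whose rank function satisfies the semimodular inequality. The order complex $\Delta(L)$ has the chains of $L-\{\hat 0,\hat 1\}$ as faces; facets correspond to maximal chains. Fix a linear order on the atoms; for a cover $x\lessdot y$ let $\lambda(x,y)$ be the least atom $a$ with $x\vee a=y$, and for a facet $F$ given by $\hat 0=x_0<\dots<x_{r+1}=\hat 1$ its minimal labeling is $\lambda(F)=(\lambda(x_0,x_1),\dots,\lambda(x_r,x_{r+1}))$. A basis is a set of $r+1$ atoms with join $\hat 1$; a circuit is a minimal dependent set of atoms (a set $A$ is independent if the rank of $\bigvee A$ is $|A|$); a broken circuit is a circuit minus its least element; an nbc-basis is a basis containing no broken circuit. The nbc-bases, each written as an increasing sequence, are ordered lexicographically: $B_1,\dots,B_m$. For an ordering $(b_1,\dots,b_{r+1})$ of a basis $B$, the associated facet is $b_1<b_1\vee b_2<\dots<b_1\vee\dots\vee b_r$, and its basis labeling is $(b_1,\dots,b_{r+1})$. $\Sigma_j$ is the subcomplex of $\Delta(L)$ that is the union of the facets associated to all orderings of $B_j$, and $\Delta_j$ is the pure subcomplex of $\Sigma_j$ generated by those facets of $\Sigma_j$ whose minimal labeling coincides with their basis labeling with respect to $B_j$. *)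

theory Defs
  imports "HOL-Analysis.Analysis"
begin

text \<open>Lattices are finite types with a (necessarily unique) complete lattice structure.\<close>

definition covers :: "'a::complete_lattice \<Rightarrow> 'a \<Rightarrow> bool" where
  "covers x y \<longleftrightarrow> x < y \<and> \<not> (\<exists>z. x < z \<and> z < y)"

definition is_atom :: "'a::complete_lattice \<Rightarrow> bool" where
  "is_atom a \<longleftrightarrow> covers bot a"

definition is_chain :: "'a::complete_lattice set \<Rightarrow> bool" where
  "is_chain C \<longleftrightarrow> (\<forall>a\<in>C. \<forall>b\<in>C. a \<le> b \<or> b \<le> a)"

definition lrank :: "'a::{finite,complete_lattice} \<Rightarrow> nat" where
  "lrank x = Max {card C | C. C \<subseteq> {y. y \<le> x} \<and> is_chain C} - 1"

definition graded :: "'a::{finite,complete_lattice} itself \<Rightarrow> bool" where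
  "graded _ \<longleftrightarrow> (\<forall>x y::'a. covers x y \<longrightarrow> lrank y = lrank x + 1)"

definition atomistic :: "'a::complete_lattice itself \<Rightarrow> bool" where
  "atomistic _ \<longleftrightarrow> (\<forall>x::'a. x = Sup {a. is_atom a \<and> a \<le> x})"

definition semimodular :: "'a::{finite,complete_lattice} itself \<Rightarrow> bool" where
  "semimodular _ \<longleftrightarrow> (\<forall>x y::'a. lrank (sup x y) + lrank (inf x y) \<le> lrank x + lrank y)"

definition geometric_lattice :: "'a::{finite,complete_lattice} itself \<Rightarrow> bool" where
  "geometric_lattice T \<longleftrightarrow> graded T \<and> atomistic T \<and> semimodular T"

text \<open>The linear order on atoms is given by an injective weight w: a precedes b iff w a < w b.\<close>

definition independent :: "'a::{finite,complete_lattice} set \<Rightarrow> bool" where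
  "independent A \<longleftrightarrow> (\<forall>a\<in>A. is_atom a) \<and> lrank (Sup A) = card A"

definition is_basis :: "'a::{finite,complete_lattice} set \<Rightarrow> bool" where
  "is_basis B \<longleftrightarrow> (\<forall>a\<in>B. is_atom a) \<and> card B = lrank (top::'a) \<and> Sup B = top"

definition is_circuit :: "'a::{finite,complete_lattice} set \<Rightarrow> bool" where
  "is_circuit C \<longleftrightarrow> (\<forall>a\<in>C. is_atom a) \<and> \<not> independent C \<and> (\<forall>D. D \<subset> C \<longrightarrow> independent D)"

definition broken_circuit :: "('a::{finite,complete_lattice} \<Rightarrow> nat) \<Rightarrow> 'a set \<Rightarrow> bool" where
  "broken_circuit w D \<longleftrightarrow> (\<exists>C. is_circuit C \<and> D = C - {arg_min_on w C})"

definition nbc_basis :: "('a::{finite,complete_lattice} \<Rightarrow> nat) \<Rightarrow> 'a set \<Rightarrow> bool" where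
  "nbc_basis w B \<longleftrightarrow> is_basis B \<and> \<not> (\<exists>D. D \<subseteq> B \<and> broken_circuit w D)"

definition lex_less :: "('a \<Rightarrow> nat) \<Rightarrow> 'a set \<Rightarrow> 'a set \<Rightarrow> bool" where
  "lex_less w B B' \<longleftrightarrow>
     (sorted_list_of_set (w ` B), sorted_list_of_set (w ` B')) \<in> lexord {(a, b). a < b}"

definition minlab :: "('a::complete_lattice \<Rightarrow> nat) \<Rightarrow> 'a \<Rightarrow> 'a \<Rightarrow> 'a" where
  "minlab w x y = arg_min w (\<lambda>a. is_atom a \<and> sup x a = y)"

definition pjoin :: "'a::complete_lattice list \<Rightarrow> nat \<Rightarrow> 'a" where
  "pjoin bs i = Sup (set (take i bs))"

definition assoc_facet :: "'a::complete_lattice list \<Rightarrow> 'a set" where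
  "assoc_facet bs = {pjoin bs i | i. 1 \<le> i \<and> i < length bs}"

definition minlab_eq_basislab :: "('a::complete_lattice \<Rightarrow> nat) \<Rightarrow> 'a list \<Rightarrow> bool" where
  "minlab_eq_basislab w bs \<longleftrightarrow>
     (\<forall>i < length bs. minlab w (pjoin bs i) (pjoin bs (Suc i)) = bs ! i)"

definition Delta :: "('a::complete_lattice \<Rightarrow> nat) \<Rightarrow> 'a set \<Rightarrow> 'a set set" where
  "Delta w B = {\<sigma>. \<exists>bs. distinct bs \<and> set bs = B \<and> minlab_eq_basislab w bs
                        \<and> \<sigma> \<subseteq> assoc_facet bs}"

definition realization :: "'a::finite set set \<Rightarrow> (real ^ 'a) set" where
  "realization K = (\<Union>\<sigma>\<in>K. convex hull ((\<lambda>v. axis v 1) ` \<sigma>))"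

end

theory Submission
  imports Defs
begin

(* Height coordinates straighten Delta_j.  A point of the realization with barycentric
   coordinates l on the chain x_1 < ... < x_r of an ordering of B goes to the vector t with
   t_b = sum of l over the chain elements above b.  On one facet this is an affine bijection onto
   the vectors that decrease along the ordering from 1 down to 0, and "minimal labeling = basis
   labeling" becomes: on the support in B of every atom e, t attains its minimum at an element
   not heavier than e.  So Delta_j is homeomorphic to the set K of such admissible vectors with
   minimum 0 and maximum 1.

   Admissibility reads defect t <= 0 for a continuous, positively homogeneous function that drops
   at unit rate along the weight vector; since B is not the first nbc basis, some atom has a
   support element heavier than itself, so the constraint is not vacuous.  Forgetting constants
   and the weight direction leaves R^(r-1).  Rescaling the pair (reduced t, defect t) onto the unit
   sphere of R^(r-1) x R, the vectors of K correspond exactly to the closed lower hemisphere, whose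
   vertical projection is the closed (r-1)-ball. *)

section \<open>Rank in finite lattices\<close>

lemma lrank_chain_exists:
  fixes x :: "'a::{finite,complete_lattice}"
  shows "\<exists>C. C \<subseteq> {y. y \<le> x} \<and> is_chain C \<and> card C = lrank x + 1"
    and card_chain_le_lrank: "C \<subseteq> {y. y \<le> x} \<Longrightarrow> is_chain C \<Longrightarrow> card C \<le> lrank x + 1"
proof -
  let ?S = "{card C | C. C \<subseteq> {y. y \<le> x} \<and> is_chain C}"
  have finite: "finite ?S"
    by (rule finite_subset[of _ "card ` UNIV"]) auto
  have "1 \<in> ?S"
    by (rule CollectI, rule exI[of _ "{x}"]) (auto simp: is_chain_def)
  then have Max_ge_1: "Max ?S \<ge> 1"
    using finite by (auto intro: Max_ge)
  show "card C \<le> lrank x + 1" if "C \<subseteq> {y. y \<le> x}" "is_chain C"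
  proof -
    have "card C \<le> Max ?S"
      using finite that by (auto intro: Max_ge)
    then show ?thesis
      using Max_ge_1 unfolding lrank_def by simp
  qed
  have "Max ?S \<in> ?S"
    using finite \<open>1 \<in> ?S\<close> by (intro Max_in) auto
  then obtain D where "D \<subseteq> {y. y \<le> x}" "is_chain D" "card D = Max ?S"
    by auto
  then show "\<exists>C. C \<subseteq> {y. y \<le> x} \<and> is_chain C \<and> card C = lrank x + 1"
    using Max_ge_1 unfolding lrank_def by auto
qed

lemma lrank_strict_mono:
  fixes x y :: "'a::{finite,complete_lattice}"
  assumes "x < y"
  shows "lrank x < lrank y"
proof -
  obtain C where C: "C \<subseteq> {z. z \<le> x}" "is_chain C" "card C = lrank x + 1"
    using lrank_chain_exists by blast
  have "y \<notin> C"
    using C(1) assms by auto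
  have "insert y C \<subseteq> {z. z \<le> y}" "is_chain (insert y C)"
    using C(1,2) assms unfolding is_chain_def by auto
  then have "card (insert y C) \<le> lrank y + 1"
    by (rule card_chain_le_lrank)
  then show ?thesis
    using C(3) \<open>y \<notin> C\<close> by simp
qed

lemma lrank_mono:
  fixes x y :: "'a::{finite,complete_lattice}"
  shows "x \<le> y \<Longrightarrow> lrank x \<le> lrank y"
  using lrank_strict_mono[of x y] by (cases "x = y") (auto simp: less_le)

lemma eq_if_le_and_lrank_eq:
  fixes x y :: "'a::{finite,complete_lattice}"
  shows "x \<le> y \<Longrightarrow> lrank x = lrank y \<Longrightarrow> x = y"
  using lrank_strict_mono[of x y] by (cases "x = y") (auto simp: less_le)

lemma lrank_bot [simp]: "lrank (bot::'a::{finite,complete_lattice}) = 0"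
proof -
  obtain C where C: "C \<subseteq> {y::'a. y \<le> bot}" "card C = lrank (bot::'a) + 1"
    using lrank_chain_exists by blast
  have "C \<subseteq> {bot}"
    using C(1) by (auto simp: bot_unique)
  then have "card C \<le> 1"
    using card_mono[of "{bot}" C] by simp
  then show ?thesis
    using C(2) by simp
qed

section \<open>Geometric lattices\<close>

lemma atom_not_bot: "is_atom a \<Longrightarrow> a \<noteq> bot"
  unfolding is_atom_def covers_def by auto

lemma inf_atom_eq_bot:
  fixes a x :: "'a::complete_lattice"
  assumes "is_atom a" "\<not> a \<le> x"
  shows "inf x a = bot"
proof (rule ccontr)
  assume "inf x a \<noteq> bot"
  then have "inf x a = a"
    using assms(1) inf.cobounded2[of x a]
    unfolding is_atom_def covers_def by (metis bot.not_eq_extremum le_less)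
  then show False
    using assms(2) by (metis inf.cobounded1)
qed

context
  assumes geometric: "geometric_lattice TYPE('a::{finite,complete_lattice})"
begin

lemma lrank_covers: "covers x y \<Longrightarrow> lrank y = lrank (x::'a) + 1"
  using geometric unfolding geometric_lattice_def graded_def by blast

lemma lrank_sup_inf_le: "lrank (sup x y) + lrank (inf x y) \<le> lrank x + lrank (y::'a)"
  using geometric unfolding geometric_lattice_def semimodular_def by blast

lemma lrank_atom: "is_atom (a::'a) \<Longrightarrow> lrank a = 1"
  using lrank_covers unfolding is_atom_def by fastforce

lemma lrank_sup_atom:
  assumes "is_atom (a::'a)" "\<not> a \<le> x"
  shows "lrank (sup x a) = lrank x + 1"
proof -
  have "lrank (sup x a) \<le> lrank x + 1"
    using lrank_sup_inf_le[of x a] inf_atom_eq_bot[OF assms] lrank_atom[OF assms(1)] by simp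
  moreover have "x < sup x a"
    using assms(2) by (simp add: less_le) (metis sup.absorb_iff1 sup_ge2)
  then have "lrank x < lrank (sup x a)"
    by (rule lrank_strict_mono)
  ultimately show ?thesis
    by simp
qed

lemma lrank_sup_atom_le: "is_atom (a::'a) \<Longrightarrow> lrank (sup x a) \<le> lrank x + 1"
  using lrank_sup_atom[of a x] by (cases "a \<le> x") (auto simp: sup.absorb1)

lemma sup_atom_eq_iff:
  assumes "is_atom (a::'a)" "x \<le> y" "lrank y = lrank x + 1"
  shows "sup x a = y \<longleftrightarrow> a \<le> y \<and> \<not> a \<le> x"
proof
  assume "sup x a = y"
  then show "a \<le> y \<and> \<not> a \<le> x"
    using assms(3) by (auto simp: sup.absorb1)
next
  assume a: "a \<le> y \<and> \<not> a \<le> x"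
  then have "lrank (sup x a) = lrank y"
    using lrank_sup_atom[OF assms(1)] assms(3) by simp
  then show "sup x a = y"
    using eq_if_le_and_lrank_eq[of "sup x a" y] a assms(2) by simp
qed

lemma lrank_Sup_union_le:
  fixes A D :: "'a set"
  assumes "\<forall>a\<in>A. is_atom a"
  shows "lrank (Sup (A \<union> D)) \<le> lrank (Sup D) + card A"
  using finite[of A] assms
proof (induction A rule: finite_induct)
  case (insert a A)
  have "Sup (insert a A \<union> D) = sup (Sup (A \<union> D)) a"
    by (simp add: sup_commute)
  then show ?case
    using lrank_sup_atom_le[of a "Sup (A \<union> D)"] insert by simp
qed simp

lemma independent_subset:
  assumes "independent (B::'a set)" "D \<subseteq> B"
  shows "independent D"
proof -
  have atoms: "\<forall>a\<in>B. is_atom a"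
    using assms(1) unfolding independent_def by blast
  have "card B = lrank (Sup ((B - D) \<union> D))"
    using assms unfolding independent_def by (simp add: Un_absorb2)
  also have "\<dots> \<le> lrank (Sup D) + card (B - D)"
    using atoms by (intro lrank_Sup_union_le) auto
  finally have "card D \<le> lrank (Sup D)"
    using assms(2) card_Diff_subset[of D B] card_mono[of B D] by simp
  moreover have "lrank (Sup D) \<le> card D"
    using lrank_Sup_union_le[of D "{}"] atoms assms(2) by auto
  ultimately show ?thesis
    using atoms assms(2) unfolding independent_def by auto
qed

lemma mem_if_le_Sup_independent:
  assumes "independent (B::'a set)" "D \<subseteq> B" "b \<in> B" "b \<le> Sup D"
  shows "b \<in> D"
proof (rule ccontr)
  assume "b \<notin> D"
  moreover have "independent (insert b D)" "independent D"
    using assms by (auto intro: independent_subset)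
  moreover have "Sup (insert b D) = Sup D"
    using assms(4) by (simp add: sup.absorb2)
  ultimately show False
    unfolding independent_def by simp
qed

lemma inf_Sup_independent:
  assumes "independent (B::'a set)" "D \<subseteq> B" "D' \<subseteq> B"
  shows "inf (Sup D) (Sup D') = Sup (D \<inter> D')"
proof -
  have indep: "independent D" "independent D'" "independent (D \<union> D')" "independent (D \<inter> D')"
    using assms by (auto intro: independent_subset)
  have "lrank (Sup (D \<union> D')) + lrank (inf (Sup D) (Sup D')) \<le> lrank (Sup D) + lrank (Sup D')"
    using lrank_sup_inf_le[of "Sup D" "Sup D'"] by (simp add: Sup_union_distrib)
  then have "lrank (inf (Sup D) (Sup D')) \<le> card (D \<inter> D')"
    using indep card_Un_Int[of D D'] unfolding independent_def by simp
  moreover have le: "Sup (D \<inter> D') \<le> inf (Sup D) (Sup D')"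
    by (simp add: Sup_subset_mono)
  ultimately have "lrank (Sup (D \<inter> D')) = lrank (inf (Sup D) (Sup D'))"
    using lrank_mono[OF le] indep(4) unfolding independent_def by simp
  then show ?thesis
    using eq_if_le_and_lrank_eq[OF le] by simp
qed

end

section \<open>Minimal labels, orderings and the lexicographic order\<close>

lemma minlab_eq_iff:
  assumes "inj_on w {a. is_atom a}" "is_atom b" "sup x b = y"
  shows "minlab w x y = b \<longleftrightarrow> (\<forall>a. is_atom a \<longrightarrow> sup x a = y \<longrightarrow> w b \<le> w a)"
proof -
  let ?P = "\<lambda>a. is_atom a \<and> sup x a = y"
  have "?P (minlab w x y)" "w (minlab w x y) \<le> w b"
    using arg_min_nat_lemma[of ?P b w] assms(2,3) unfolding minlab_def by auto
  moreover have "w (minlab w x y) \<le> w a" if "?P a" for a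
    using that unfolding minlab_def by (rule arg_min_nat_le)
  ultimately show ?thesis
    using assms(1,2) unfolding inj_on_def by (metis le_antisym mem_Collect_eq)
qed

lemma sorted_distinct_split_less:
  fixes xs :: "'b::linorder list"
  assumes "sorted xs" "distinct xs" "xs = u @ b # v"
  shows "set u = {x \<in> set xs. x < b}"
  using assms by (auto simp: sorted_append less_le)

lemma lexord_sorted_distinct_witness:
  fixes xs ys :: "'b::linorder list"
  assumes "sorted xs" "distinct xs" "sorted ys" "distinct ys" "length xs = length ys"
    and "(xs, ys) \<in> lexord {(a, b). a < b}"
  obtains a where "a \<in> set xs" "a \<notin> set ys" "{y \<in> set ys. y < a} \<subseteq> set xs"
proof -
  obtain u a b v v' where ab: "a < b" "xs = u @ a # v" "ys = u @ b # v'"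
    using assms(5,6) unfolding lexord_def by auto
  have below_b: "set u = {y \<in> set ys. y < b}"
    by (rule sorted_distinct_split_less[OF assms(3,4) ab(3)])
  have "set u = {x \<in> set xs. x < a}"
    by (rule sorted_distinct_split_less[OF assms(1,2) ab(2)])
  then have "a \<notin> set u"
    by blast
  then have "a \<notin> set ys"
    using below_b ab(1) by blast
  moreover have "{y \<in> set ys. y < a} \<subseteq> set u"
    unfolding below_b using ab(1) by auto
  then have "{y \<in> set ys. y < a} \<subseteq> set xs"
    using ab(2) by auto
  ultimately show ?thesis
    using that[of a] ab(2) by simp
qed

lemma lex_less_witness:
  assumes "finite B" "finite B'" "inj_on w (B \<union> B')" "card B' = card B" "lex_less w B' B"
  obtains a where "a \<in> B'" "a \<notin> B" "\<And>b. b \<in> B \<Longrightarrow> w b < w a \<Longrightarrow> b \<in> B'"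
proof -
  have inj: "inj_on w B" "inj_on w B'"
    using assms(3) by (auto intro: inj_on_subset)
  obtain k where k: "k \<in> w ` B'" "k \<notin> w ` B" "{y \<in> w ` B. y < k} \<subseteq> w ` B'"
    using lexord_sorted_distinct_witness[of "sorted_list_of_set (w ` B')" "sorted_list_of_set (w ` B)"]
      assms(1,2,4,5) card_image[OF inj(1)] card_image[OF inj(2)]
    unfolding lex_less_def by auto
  then obtain a where a: "a \<in> B'" "k = w a"
    by blast
  have "b \<in> B'" if "b \<in> B" "w b < w a" for b
  proof -
    have "w b \<in> w ` B'"
      using k(3) a(2) that by blast
    then obtain b' where "b' \<in> B'" "w b = w b'"
      by blast
    then show ?thesis
      using assms(3) that(1) by (metis UnI1 UnI2 inj_onD)
  qed
  then show ?thesis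
    using that a k(2) by blast
qed

lemma pjoin_mono: "i \<le> j \<Longrightarrow> pjoin bs i \<le> pjoin bs j"
  unfolding pjoin_def by (rule Sup_subset_mono, rule set_take_subset_set_take)

lemma pjoin_Suc: "i < length bs \<Longrightarrow> pjoin bs (Suc i) = sup (pjoin bs i) (bs ! i)"
  unfolding pjoin_def by (simp add: take_Suc_conv_app_nth sup_commute)

lemma exists_sorted_wrt_enumeration:
  fixes R :: "'b \<Rightarrow> 'b \<Rightarrow> bool"
  assumes "finite A"
    and irrefl: "\<And>x. x \<in> A \<Longrightarrow> \<not> R x x"
    and total: "\<And>x y. x \<in> A \<Longrightarrow> y \<in> A \<Longrightarrow> x \<noteq> y \<Longrightarrow> R x y \<or> R y x"
    and trans: "\<And>x y z. x \<in> A \<Longrightarrow> y \<in> A \<Longrightarrow> z \<in> A \<Longrightarrow> R x y \<Longrightarrow> R y z \<Longrightarrow> R x z"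
  shows "\<exists>xs. distinct xs \<and> set xs = A \<and> sorted_wrt R xs"
proof -
  define k where "k x = card {c \<in> A. R c x}" for x
  have k_less: "k x < k y" if "x \<in> A" "y \<in> A" "R x y" for x y
  proof -
    have "{c \<in> A. R c x} \<subset> {c \<in> A. R c y}"
      using that irrefl trans by blast
    then show ?thesis
      unfolding k_def using assms(1) by (intro psubset_card_mono) auto
  qed
  have R_if_k_less: "R x y" if "x \<in> A" "y \<in> A" "k x < k y" for x y
    using that total k_less[of y x] by fastforce
  have "inj_on k A"
    by (rule inj_onI) (metis total k_less less_irrefl)
  obtain xs where xs: "distinct xs" "set xs = A"
    using finite_distinct_list[OF assms(1)] by blast
  let ?ys = "sort_key k xs"
  have "sorted_wrt (<) (map k ?ys)"
    using \<open>inj_on k A\<close> xs by (simp add: strict_sorted_iff distinct_map)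
  then have "sorted_wrt R ?ys"
    using xs R_if_k_less by (auto simp: sorted_wrt_map elim!: sorted_wrt_mono_rel[rotated])
  then show ?thesis
    using xs by (intro exI[of _ ?ys]) simp
qed

section \<open>Maxima of finitely many functions and radial projection\<close>

lemma continuous_on_Max_image:
  fixes f :: "'i \<Rightarrow> 'b::topological_space \<Rightarrow> 'c::linorder_topology"
  assumes "finite I" "I \<noteq> {}" "\<And>i. i \<in> I \<Longrightarrow> continuous_on S (f i)"
  shows "continuous_on S (\<lambda>x. Max ((\<lambda>i. f i x) ` I))"
  using assms
proof (induction I rule: finite_ne_induct)
  case (insert i I)
  then have "(\<lambda>x. Max ((\<lambda>i. f i x) ` insert i I)) = (\<lambda>x. max (f i x) (Max ((\<lambda>i. f i x) ` I)))"
    by (simp add: Max_insert)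
  then show ?case
    using insert by (auto intro: continuous_on_max)
qed simp

lemma continuous_on_Min_image:
  fixes f :: "'i \<Rightarrow> 'b::topological_space \<Rightarrow> 'c::linorder_topology"
  assumes "finite I" "I \<noteq> {}" "\<And>i. i \<in> I \<Longrightarrow> continuous_on S (f i)"
  shows "continuous_on S (\<lambda>x. Min ((\<lambda>i. f i x) ` I))"
  using assms
proof (induction I rule: finite_ne_induct)
  case (insert i I)
  then have "(\<lambda>x. Min ((\<lambda>i. f i x) ` insert i I)) = (\<lambda>x. min (f i x) (Min ((\<lambda>i. f i x) ` I)))"
    by (simp add: Min_insert)
  then show ?case
    using insert by (auto intro: continuous_on_min)
qed simp

lemma Max_image_mult_left:
  fixes f :: "'b \<Rightarrow> 'c::linordered_semiring"
  assumes "0 \<le> c" "finite A" "A \<noteq> {}"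
  shows "Max ((\<lambda>x. c * f x) ` A) = c * Max (f ` A)"
proof -
  have "mono (\<lambda>x. c * x)"
    using assms(1) by (auto intro: monoI mult_left_mono)
  then show ?thesis
    using mono_Max_commute[of "\<lambda>x. c * x" "f ` A"] assms(2,3) by (simp add: image_image)
qed

lemma Min_image_mult_left:
  fixes f :: "'b \<Rightarrow> 'c::linordered_semiring"
  assumes "0 \<le> c" "finite A" "A \<noteq> {}"
  shows "Min ((\<lambda>x. c * f x) ` A) = c * Min (f ` A)"
proof -
  have "mono (\<lambda>x. c * x)"
    using assms(1) by (auto intro: monoI mult_left_mono)
  then show ?thesis
    using mono_Min_commute[of "\<lambda>x. c * x" "f ` A"] assms(2,3) by (simp add: image_image)
qed

lemma radial_projection_eq_imp_proportional:
  fixes X1 X2 :: "'v::real_normed_vector"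
  assumes "P1 \<le> 0" "P2 \<le> 0" "0 < N1" "0 < N2"
    and "N1\<^sup>2 = (norm X1)\<^sup>2 + P1\<^sup>2" "N2\<^sup>2 = (norm X2)\<^sup>2 + P2\<^sup>2"
    and eq: "(1 / N1) *\<^sub>R X1 = (1 / N2) *\<^sub>R X2"
  shows "X2 = (N2 / N1) *\<^sub>R X1" "P2 = (N2 / N1) * P1"
proof -
  have "norm X1 / N1 = norm X2 / N2"
    using arg_cong[OF eq, of norm] assms(3,4) by simp
  moreover have "P1\<^sup>2 = N1\<^sup>2 - (norm X1)\<^sup>2" "P2\<^sup>2 = N2\<^sup>2 - (norm X2)\<^sup>2"
    using assms(5,6) by simp_all
  then have "(P1 / N1)\<^sup>2 = 1 - (norm X1 / N1)\<^sup>2" "(P2 / N2)\<^sup>2 = 1 - (norm X2 / N2)\<^sup>2"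
    using assms(3,4) by (simp_all add: power_divide diff_divide_distrib)
  ultimately have "(- (P1 / N1))\<^sup>2 = (- (P2 / N2))\<^sup>2"
    by simp
  moreover have "0 \<le> - (P1 / N1)" "0 \<le> - (P2 / N2)"
    using assms(1-4) by (simp_all add: divide_nonpos_pos)
  ultimately have "P1 / N1 = P2 / N2"
    using power2_eq_iff_nonneg[of "- (P1 / N1)" "- (P2 / N2)"] by simp
  then show "P2 = (N2 / N1) * P1"
    using assms(3,4) by (simp add: field_simps)
  have "X2 = N2 *\<^sub>R ((1 / N2) *\<^sub>R X2)"
    using assms(4) by simp
  then show "X2 = (N2 / N1) *\<^sub>R X1"
    unfolding eq[symmetric] by simp
qed

section \<open>Supports in an nbc basis and height coordinates\<close>

locale nbc_basis_setting =
  fixes w :: "'a::{finite,complete_lattice} \<Rightarrow> nat" and B :: "'a set"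
  assumes geometric: "geometric_lattice TYPE('a)"
    and w_inj: "inj_on w {a. is_atom a}"
    and nbc: "nbc_basis w B"
begin

lemma basis: "is_basis B"
  using nbc unfolding nbc_basis_def by simp

lemma atom_if_in_basis: "b \<in> B \<Longrightarrow> is_atom b"
  using basis unfolding is_basis_def by simp

lemma independent_basis: "independent B"
  using basis unfolding is_basis_def independent_def by simp

lemma Sup_basis: "Sup B = top"
  using basis unfolding is_basis_def by simp

lemma w_eq_iff: "is_atom a \<Longrightarrow> is_atom b \<Longrightarrow> w a = w b \<longleftrightarrow> a = b"
  using w_inj unfolding inj_on_def by blast

text \<open>The SOME below is well defined (least_support_exists): joins of subsets of the
  independent set B meet like the subsets themselves.\<close>

definition supp :: "'a \<Rightarrow> 'a set" where
  "supp e = (SOME D. D \<subseteq> B \<and> e \<le> Sup D \<and> (\<forall>D'. D' \<subseteq> B \<longrightarrow> e \<le> Sup D' \<longrightarrow> D \<subseteq> D'))"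

lemma least_support_exists:
  "\<exists>D. D \<subseteq> B \<and> e \<le> Sup D \<and> (\<forall>D'. D' \<subseteq> B \<longrightarrow> e \<le> Sup D' \<longrightarrow> D \<subseteq> D')"
proof -
  obtain D where D: "D \<subseteq> B" "e \<le> Sup D"
    and min: "\<And>D'. D' \<subseteq> B \<Longrightarrow> e \<le> Sup D' \<Longrightarrow> card D \<le> card D'"
    using ex_has_least_nat[of "\<lambda>D. D \<subseteq> B \<and> e \<le> Sup D" B card] Sup_basis by auto
  have "D \<subseteq> D'" if "D' \<subseteq> B" "e \<le> Sup D'" for D'
  proof -
    have "e \<le> Sup (D \<inter> D')"
      using D that inf_Sup_independent[OF geometric independent_basis, of D D'] by (metis le_inf_iff)
    then have "card D \<le> card (D \<inter> D')"
      using min D(1) by blast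
    then show ?thesis
      using card_subset_eq[of D "D \<inter> D'"] by (metis Int_lower1 card_mono finite le_antisym le_iff_inf)
  qed
  then show ?thesis
    using D by blast
qed

lemma supp_subset: "supp e \<subseteq> B"
  and le_Sup_supp: "e \<le> Sup (supp e)"
  and supp_least: "D \<subseteq> B \<Longrightarrow> e \<le> Sup D \<Longrightarrow> supp e \<subseteq> D"
  using someI_ex[OF least_support_exists[of e]] unfolding supp_def[symmetric] by blast+

lemma le_Sup_iff_supp_subset: "D \<subseteq> B \<Longrightarrow> e \<le> Sup D \<longleftrightarrow> supp e \<subseteq> D"
  using supp_least le_Sup_supp by (meson Sup_subset_mono order_trans)

lemma supp_nonempty: "is_atom e \<Longrightarrow> supp e \<noteq> {}"
  using le_Sup_supp[of e] atom_not_bot[of e] by (auto simp: bot_unique)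

lemma supp_basis_elem:
  assumes "b \<in> B"
  shows "supp b = {b}"
proof -
  have "supp b \<subseteq> {b}"
    using supp_least[of "{b}" b] assms by simp
  then show ?thesis
    using supp_nonempty[OF atom_if_in_basis[OF assms]] by auto
qed

lemma w_supp_neq: "is_atom e \<Longrightarrow> e \<notin> B \<Longrightarrow> b \<in> supp e \<Longrightarrow> w b \<noteq> w e"
  by (metis w_eq_iff atom_if_in_basis supp_subset subsetD)

lemma circuit_insert_supp:
  assumes e: "is_atom e" "e \<notin> B"
  shows "is_circuit (insert e (supp e))"
proof -
  have independent_supp: "independent D" if "D \<subseteq> supp e" for D
    using that supp_subset by (intro independent_subset[OF geometric independent_basis]) auto
  have atoms: "\<forall>a\<in>insert e (supp e). is_atom a"
    using e supp_subset atom_if_in_basis by auto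
  have "e \<notin> supp e" "Sup (insert e (supp e)) = Sup (supp e)"
    using e(2) supp_subset le_Sup_supp[of e] by (auto simp: sup.absorb2)
  then have dependent: "\<not> independent (insert e (supp e))"
    using independent_supp[of "supp e"] unfolding independent_def by simp
  have "independent D" if D: "D \<subset> insert e (supp e)" for D
  proof (cases "e \<in> D")
    case True
    let ?D = "D - {e}"
    have "?D \<subset> supp e"
      using D True by auto
    then have "\<not> e \<le> Sup ?D"
      using supp_least[of ?D e] supp_subset by auto
    moreover have "Sup D = sup (Sup ?D) e"
      by (metis Complete_Lattices.Sup_insert[of e ?D] insert_Diff[OF True] sup_commute)
    ultimately have "lrank (Sup D) = lrank (Sup ?D) + 1"
      using lrank_sup_atom[OF geometric e(1)] by simp
    moreover have "card D = card ?D + 1"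
      using True card_gt_0_iff[of D] by (auto simp: card_Diff_singleton)
    ultimately show ?thesis
      using independent_supp[of ?D] \<open>?D \<subset> supp e\<close> atoms D
      unfolding independent_def by auto
  qed (use D independent_supp in auto)
  then show ?thesis
    unfolding is_circuit_def using atoms dependent by blast
qed

lemma supp_has_lighter_elem:
  assumes e: "is_atom e" "e \<notin> B"
  shows "\<exists>b\<in>supp e. w b < w e"
proof (rule ccontr)
  assume "\<not> ?thesis"
  then have heavier: "w e \<le> w b" if "b \<in> supp e" for b
    using that by force
  let ?C = "insert e (supp e)"
  have "arg_min_on w ?C \<in> ?C" "w (arg_min_on w ?C) \<le> w e"
    using arg_min_nat_lemma[of "\<lambda>x. x \<in> ?C" e w] unfolding arg_min_on_def by auto
  then have "arg_min_on w ?C = e"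
    using heavier w_supp_neq[OF e] by force
  then have "broken_circuit w (supp e)"
    unfolding broken_circuit_def
    using circuit_insert_supp[OF e] supp_subset e(2) by (intro exI[of _ ?C]) auto
  then show False
    using nbc supp_subset unfolding nbc_basis_def by blast
qed

lemma exists_supp_heavier_elem:
  assumes "\<exists>B'. nbc_basis w B' \<and> lex_less w B' B"
  shows "\<exists>e d. is_atom e \<and> e \<notin> B \<and> d \<in> supp e \<and> w e < w d"
proof (rule ccontr)
  assume "\<not> ?thesis"
  then have lighter: "w d < w e" if "is_atom e" "e \<notin> B" "d \<in> supp e" for e d
    using that w_supp_neq[OF that] by force
  obtain B' where B': "is_basis B'" "lex_less w B' B"
    using assms unfolding nbc_basis_def by blast
  have atoms: "\<And>a. a \<in> B \<union> B' \<Longrightarrow> is_atom a"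
    using B'(1) atom_if_in_basis unfolding is_basis_def by auto
  have "inj_on w (B \<union> B')"
    using w_inj atoms by (meson inj_on_subset mem_Collect_eq subsetI)
  moreover have "card B' = card B"
    using B'(1) basis unfolding is_basis_def by simp
  ultimately obtain a where a: "a \<in> B'" "a \<notin> B" and below: "\<And>b. b \<in> B \<Longrightarrow> w b < w a \<Longrightarrow> b \<in> B'"
    using lex_less_witness[of B B' w] B'(2) by auto
  have "supp a \<subseteq> {x \<in> B'. w x < w a}"
    using lighter[OF atoms a(2)] below supp_subset a(1) by blast
  then have le: "a \<le> Sup {x \<in> B'. w x < w a}"
    by (rule order_trans[OF le_Sup_supp Sup_subset_mono])
  have "independent B'"
    using B'(1) unfolding is_basis_def independent_def by simp
  then have "a \<in> {x \<in> B'. w x < w a}"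
    by (rule mem_if_le_Sup_independent[OF geometric _ _ a(1) le]) auto
  then show False
    by simp
qed

abbreviation n :: nat where
  "n \<equiv> card B"

definition ordering :: "'a list \<Rightarrow> bool" where
  "ordering bs \<longleftrightarrow> distinct bs \<and> set bs = B"

lemma length_ordering: "ordering bs \<Longrightarrow> length bs = n"
  unfolding ordering_def using distinct_card by fastforce

lemma ordering_nth_mem: "ordering bs \<Longrightarrow> m < n \<Longrightarrow> bs ! m \<in> B"
  using length_ordering unfolding ordering_def by (metis nth_mem)

lemma ordering_obtain_index:
  assumes "ordering bs" "b \<in> B"
  obtains m where "m < n" "b = bs ! m"
  using assms length_ordering unfolding ordering_def by (metis in_set_conv_nth)

lemma ordering_nth_in_take_iff:
  assumes "ordering bs" "m < n"
  shows "bs ! m \<in> set (take i bs) \<longleftrightarrow> m < i"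
  using assms length_ordering[OF assms(1)] unfolding ordering_def
  by (auto simp: in_set_conv_nth nth_eq_iff_index_eq)

lemma set_take_ordering_subset: "ordering bs \<Longrightarrow> set (take i bs) \<subseteq> B"
  unfolding ordering_def by (auto dest: in_set_takeD)

lemma lrank_pjoin:
  assumes "ordering bs" "i \<le> n"
  shows "lrank (pjoin bs i) = i"
proof -
  have "independent (set (take i bs))"
    by (rule independent_subset[OF geometric independent_basis set_take_ordering_subset[OF assms(1)]])
  moreover have "card (set (take i bs)) = i"
    using assms length_ordering[OF assms(1)] unfolding ordering_def by (simp add: distinct_card)
  ultimately show ?thesis
    unfolding pjoin_def independent_def by simp
qed

lemma le_pjoin_iff:
  assumes "ordering bs"
  shows "e \<le> pjoin bs i \<longleftrightarrow> (\<forall>m<n. bs ! m \<in> supp e \<longrightarrow> m < i)"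
proof -
  have "e \<le> pjoin bs i \<longleftrightarrow> supp e \<subseteq> set (take i bs)"
    unfolding pjoin_def by (rule le_Sup_iff_supp_subset[OF set_take_ordering_subset[OF assms]])
  also have "\<dots> \<longleftrightarrow> (\<forall>m<n. bs ! m \<in> supp e \<longrightarrow> m < i)"
  proof
    assume "supp e \<subseteq> set (take i bs)"
    then show "\<forall>m<n. bs ! m \<in> supp e \<longrightarrow> m < i"
      using ordering_nth_in_take_iff[OF assms] by blast
  next
    assume indices: "\<forall>m<n. bs ! m \<in> supp e \<longrightarrow> m < i"
    show "supp e \<subseteq> set (take i bs)"
    proof
      fix b
      assume "b \<in> supp e"
      moreover obtain m where "m < n" "b = bs ! m"
        using ordering_obtain_index[OF assms] supp_subset \<open>b \<in> supp e\<close> by blast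
      ultimately show "b \<in> set (take i bs)"
        using indices ordering_nth_in_take_iff[OF assms] by blast
    qed
  qed
  finally show ?thesis .
qed

lemma nth_le_pjoin_iff:
  assumes "ordering bs" "m < n"
  shows "bs ! m \<le> pjoin bs i \<longleftrightarrow> m < i"
proof
  assume "bs ! m \<le> pjoin bs i"
  then have "bs ! m \<in> set (take i bs)"
    unfolding pjoin_def
    by (rule mem_if_le_Sup_independent[OF geometric independent_basis
          set_take_ordering_subset[OF assms(1)] ordering_nth_mem[OF assms]])
  then show "m < i"
    using ordering_nth_in_take_iff[OF assms] by blast
next
  assume "m < i"
  then show "bs ! m \<le> pjoin bs i"
    using ordering_nth_in_take_iff[OF assms] unfolding pjoin_def by (blast intro: Sup_upper)
qed

lemma obtain_last_supp_index:
  assumes "ordering bs" "is_atom e"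
  obtains i where "i < n" "bs ! i \<in> supp e" "e \<le> pjoin bs (Suc i)" "\<not> e \<le> pjoin bs i"
proof -
  let ?I = "{m. m < n \<and> bs ! m \<in> supp e}"
  obtain b where "b \<in> supp e"
    using supp_nonempty[OF assms(2)] by blast
  then have "?I \<noteq> {}"
    using supp_subset ordering_obtain_index[OF assms(1)] by blast
  then have max: "Max ?I \<in> ?I" "\<forall>m\<in>?I. m \<le> Max ?I"
    using Max_in[of ?I] by auto
  then have "e \<le> pjoin bs (Suc (Max ?I))" "\<not> e \<le> pjoin bs (Max ?I)"
    using le_pjoin_iff[OF assms(1)] by (auto simp: less_Suc_eq_le)
  then show ?thesis
    using that max(1) by blast
qed

lemma minlab_eq_basislab_iff:
  assumes "ordering bs"
  shows "minlab_eq_basislab w bs \<longleftrightarrow>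
    (\<forall>i<n. \<forall>a. is_atom a \<longrightarrow> a \<le> pjoin bs (Suc i) \<longrightarrow> \<not> a \<le> pjoin bs i \<longrightarrow> w (bs ! i) \<le> w a)"
proof -
  have "minlab w (pjoin bs i) (pjoin bs (Suc i)) = bs ! i \<longleftrightarrow>
     (\<forall>a. is_atom a \<longrightarrow> a \<le> pjoin bs (Suc i) \<longrightarrow> \<not> a \<le> pjoin bs i \<longrightarrow> w (bs ! i) \<le> w a)"
    if "i < n" for i
  proof -
    have cover: "sup (pjoin bs i) a = pjoin bs (Suc i) \<longleftrightarrow> a \<le> pjoin bs (Suc i) \<and> \<not> a \<le> pjoin bs i"
      if "is_atom a" for a
      using sup_atom_eq_iff[OF geometric that pjoin_mono] lrank_pjoin[OF assms] \<open>i < n\<close> by simp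
    have "is_atom (bs ! i)" "sup (pjoin bs i) (bs ! i) = pjoin bs (Suc i)"
      using atom_if_in_basis ordering_nth_mem[OF assms \<open>i < n\<close>] pjoin_Suc[of i bs]
        length_ordering[OF assms] \<open>i < n\<close> by auto
    then show ?thesis
      using minlab_eq_iff[OF w_inj] cover by blast
  qed
  then show ?thesis
    unfolding minlab_eq_basislab_def using length_ordering[OF assms] by simp
qed

definition admissible :: "(real, 'a) vec \<Rightarrow> bool" where
  "admissible t \<longleftrightarrow> (\<forall>e. is_atom e \<longrightarrow> (\<exists>b\<in>supp e. w b \<le> w e \<and> (\<forall>b'\<in>supp e. t$b \<le> t$b')))"

definition antitone_along :: "'a list \<Rightarrow> (real, 'a) vec \<Rightarrow> bool" where
  "antitone_along bs t \<longleftrightarrow> (\<forall>j k. j \<le> k \<longrightarrow> k < n \<longrightarrow> t$(bs ! k) \<le> t$(bs ! j))"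

definition lex_decreasing_along :: "'a list \<Rightarrow> (real, 'a) vec \<Rightarrow> bool" where
  "lex_decreasing_along bs t \<longleftrightarrow> (\<forall>j k. j < k \<longrightarrow> k < n \<longrightarrow>
      t$(bs ! k) < t$(bs ! j) \<or> (t$(bs ! k) = t$(bs ! j) \<and> w (bs ! k) < w (bs ! j)))"

lemma antitone_if_lex_decreasing: "lex_decreasing_along bs t \<Longrightarrow> antitone_along bs t"
  unfolding lex_decreasing_along_def antitone_along_def by (metis le_less order.refl)

lemma exists_lex_decreasing_ordering: "\<exists>bs. ordering bs \<and> lex_decreasing_along bs t"
proof -
  define R where "R x y \<longleftrightarrow> t$y < t$x \<or> (t$y = t$x \<and> w y < w x)" for x y
  have "\<exists>bs. distinct bs \<and> set bs = B \<and> sorted_wrt R bs"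
  proof (rule exists_sorted_wrt_enumeration)
    show "R x y \<or> R y x" if "x \<in> B" "y \<in> B" "x \<noteq> y" for x y
    proof -
      have "w x \<noteq> w y"
        using that w_eq_iff atom_if_in_basis by blast
      then show ?thesis
        unfolding R_def by linarith
    qed
    show "R x z" if "x \<in> B" "y \<in> B" "z \<in> B" "R x y" "R y z" for x y z
      using that(4,5) unfolding R_def by auto
  qed (auto simp: R_def)
  then obtain bs where bs: "distinct bs" "set bs = B" "sorted_wrt R bs"
    by blast
  then have "length bs = n"
    using distinct_card by fastforce
  then have "lex_decreasing_along bs t"
    using bs(3) unfolding lex_decreasing_along_def R_def by (auto simp: sorted_wrt_iff_nth_less)
  then show ?thesis
    using bs(1,2) unfolding ordering_def by blast
qed

lemma admissible_if_minlab_eq_basislab: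
  assumes bs: "ordering bs" "minlab_eq_basislab w bs" and "antitone_along bs t"
  shows "admissible t"
  unfolding admissible_def
proof (intro allI impI)
  fix e :: 'a
  assume "is_atom e"
  then obtain i where i: "i < n" "bs ! i \<in> supp e" "e \<le> pjoin bs (Suc i)" "\<not> e \<le> pjoin bs i"
    using obtain_last_supp_index[OF bs(1)] by blast
  then have "w (bs ! i) \<le> w e"
    using bs minlab_eq_basislab_iff \<open>is_atom e\<close> by blast
  moreover have "t$(bs ! i) \<le> t$b'" if "b' \<in> supp e" for b'
  proof -
    obtain m where "m < n" "b' = bs ! m"
      using ordering_obtain_index[OF bs(1)] supp_subset \<open>b' \<in> supp e\<close> by blast
    then show ?thesis
      using i(3) \<open>antitone_along bs t\<close> \<open>b' \<in> supp e\<close> le_pjoin_iff[OF bs(1)] i(1)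
      unfolding antitone_along_def by (simp add: less_Suc_eq_le)
  qed
  ultimately show "\<exists>b\<in>supp e. w b \<le> w e \<and> (\<forall>b'\<in>supp e. t$b \<le> t$b')"
    using i(2) by blast
qed

lemma minlab_eq_basislab_if_admissible:
  assumes bs: "ordering bs" "lex_decreasing_along bs t" and "admissible t"
  shows "minlab_eq_basislab w bs"
  unfolding minlab_eq_basislab_iff[OF bs(1)]
proof (intro allI impI)
  fix i a
  assume i: "i < n" and a: "is_atom a" "a \<le> pjoin bs (Suc i)" "\<not> a \<le> pjoin bs i"
  have supp_a: "\<And>m. m < n \<Longrightarrow> bs ! m \<in> supp a \<Longrightarrow> m \<le> i" "bs ! i \<in> supp a"
    using a(2,3) le_pjoin_iff[OF bs(1)] i by (auto simp: less_Suc_eq_le)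
  obtain b where b: "b \<in> supp a" "w b \<le> w a" "\<forall>b'\<in>supp a. t$b \<le> t$b'"
    using \<open>admissible t\<close> a(1) unfolding admissible_def by blast
  obtain j where j: "j < n" "b = bs ! j"
    using ordering_obtain_index[OF bs(1)] supp_subset b(1) by blast
  have t_le: "t$(bs ! j) \<le> t$(bs ! i)"
    using b(3) supp_a(2) j(2) by blast
  have "j \<le> i"
    using supp_a(1) j b(1) by blast
  show "w (bs ! i) \<le> w a"
  proof (cases "j = i")
    case False
    then have "t$(bs ! i) < t$(bs ! j) \<or> (t$(bs ! i) = t$(bs ! j) \<and> w (bs ! i) < w (bs ! j))"
      using bs(2) i \<open>j \<le> i\<close> unfolding lex_decreasing_along_def by simp
    then show ?thesis
      using t_le b(2) j(2) by auto
  qed (use b(2) j(2) in simp)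
qed

text \<open>The coordinate change that straightens Delta: a point with barycentric coordinates on a
  chain goes to the vector whose b-th entry is the total coordinate of the chain elements
  above b.\<close>

definition upset_sum :: "(real, 'a) vec \<Rightarrow> (real, 'a) vec" where
  "upset_sum y = (\<chi> b. if b \<in> B then (\<Sum>v\<in>{v. b \<le> v}. y$v) else 0)"

definition gap :: "'a list \<Rightarrow> (real, 'a) vec \<Rightarrow> nat \<Rightarrow> real" where
  "gap bs t i = t$(bs ! (i - 1)) - t$(bs ! i)"

definition chain_point :: "'a list \<Rightarrow> (real, 'a) vec \<Rightarrow> (real, 'a) vec" where
  "chain_point bs t = (\<Sum>i\<in>{1..<n}. gap bs t i *\<^sub>R axis (pjoin bs i) 1)"

definition normalized :: "(real, 'a) vec \<Rightarrow> bool" where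
  "normalized t \<longleftrightarrow> (\<forall>v. v \<notin> B \<longrightarrow> t$v = 0) \<and> (\<forall>b\<in>B. 0 \<le> t$b \<and> t$b \<le> 1)
     \<and> (\<exists>b\<in>B. t$b = 1) \<and> (\<exists>b\<in>B. t$b = 0)"

lemma upset_sum_axis_combination:
  "upset_sum (\<Sum>i\<in>I. l i *\<^sub>R axis (x i) 1) $ b =
     (if b \<in> B then (\<Sum>i\<in>I. if b \<le> x i then l i else 0) else 0)"
proof -
  have "(\<Sum>v\<in>{v. b \<le> v}. (\<Sum>i\<in>I. l i *\<^sub>R axis (x i) 1) $ v)
      = (\<Sum>v\<in>{v. b \<le> v}. \<Sum>i\<in>I. if v = x i then l i else 0)"
    by (auto simp: sum_component axis_def intro!: sum.cong)
  also have "\<dots> = (\<Sum>i\<in>I. \<Sum>v\<in>{v. b \<le> v}. if v = x i then l i else 0)"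
    by (rule sum.swap)
  also have "\<dots> = (\<Sum>i\<in>I. if b \<le> x i then l i else 0)"
    by (rule sum.cong) (simp_all add: sum.delta')
  finally show ?thesis
    unfolding upset_sum_def by simp
qed

lemma upset_sum_chain_combination:
  assumes "ordering bs" "m < n"
  shows "upset_sum (\<Sum>i\<in>{1..<n}. l i *\<^sub>R axis (pjoin bs i) 1) $ (bs ! m) = (\<Sum>i\<in>{Suc m..<n}. l i)"
proof -
  have "upset_sum (\<Sum>i\<in>{1..<n}. l i *\<^sub>R axis (pjoin bs i) 1) $ (bs ! m)
      = (\<Sum>i\<in>{1..<n}. if bs ! m \<le> pjoin bs i then l i else 0)"
    unfolding upset_sum_axis_combination using ordering_nth_mem[OF assms] by simp
  also have "\<dots> = (\<Sum>i\<in>{1..<n}. if Suc m \<le> i then l i else 0)"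
    by (simp add: nth_le_pjoin_iff[OF assms] Suc_le_eq)
  also have "\<dots> = (\<Sum>i\<in>{i\<in>{1..<n}. Suc m \<le> i}. l i)"
    by (rule sum.inter_filter[symmetric]) simp
  also have "{i\<in>{1..<n}. Suc m \<le> i} = {Suc m..<n}"
    by auto
  finally show ?thesis .
qed

lemma sum_gap:
  assumes "m < n"
  shows "(\<Sum>i\<in>{Suc m..<n}. gap bs t i) = t$(bs ! m) - t$(bs ! (n - 1))"
proof -
  have "{Suc m..<n} = {Suc m..n - 1}"
    using assms by auto
  then have "(\<Sum>i\<in>{Suc m..<n}. gap bs t i) = - (\<Sum>i\<in>{Suc m..n - 1}. t$(bs ! i) - t$(bs ! (i - 1)))"
    unfolding gap_def sum_negf[symmetric] by simp
  also have "\<dots> = t$(bs ! m) - t$(bs ! (n - 1))"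
    using assms sum_telescope''[of m "n - 1" "\<lambda>i. t$(bs ! i)"] by simp
  finally show ?thesis .
qed

lemma assoc_facet_eq: "ordering bs \<Longrightarrow> assoc_facet bs = pjoin bs ` {1..<n}"
  unfolding assoc_facet_def using length_ordering by auto

lemma obtain_facet_hull_coefficients:
  assumes "ordering bs" "y \<in> convex hull ((\<lambda>v. axis v 1) ` assoc_facet bs)"
  obtains l where "\<forall>i\<in>{1..<n}. 0 \<le> l i" "sum l {1..<n} = 1"
    "y = (\<Sum>i\<in>{1..<n}. l i *\<^sub>R axis (pjoin bs i) (1::real))"
proof -
  let ?f = "\<lambda>i. axis (pjoin bs i) (1::real)"
  have inj: "inj_on ?f {1..<n}"
  proof (rule inj_onI)
    fix i j
    assume "i \<in> {1..<n}" "j \<in> {1..<n}" "?f i = ?f j"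
    then have "pjoin bs i = pjoin bs j"
      by (simp add: axis_eq_axis)
    have "i = lrank (pjoin bs i)"
      using lrank_pjoin[OF assms(1), of i] \<open>i \<in> {1..<n}\<close> by simp
    also have "\<dots> = lrank (pjoin bs j)"
      using \<open>pjoin bs i = pjoin bs j\<close> by (rule arg_cong)
    also have "\<dots> = j"
      using lrank_pjoin[OF assms(1), of j] \<open>j \<in> {1..<n}\<close> by simp
    finally show "i = j" .
  qed
  have "(\<lambda>v. axis v 1) ` assoc_facet bs = ?f ` {1..<n}"
    unfolding assoc_facet_eq[OF assms(1)] by (simp add: image_image)
  then obtain u where "\<forall>x\<in>?f ` {1..<n}. 0 \<le> u x" "sum u (?f ` {1..<n}) = 1"
      "(\<Sum>x\<in>?f ` {1..<n}. u x *\<^sub>R x) = y"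
    using assms(2) convex_hull_finite[of "?f ` {1..<n}"] by auto
  then show ?thesis
    using that[of "u \<circ> ?f"] unfolding sum.reindex[OF inj] by auto
qed

lemma obtain_realization_facet:
  assumes "y \<in> realization (Delta w B)"
  obtains bs where "ordering bs" "minlab_eq_basislab w bs"
    "y \<in> convex hull ((\<lambda>v. axis v 1) ` assoc_facet bs)"
proof -
  obtain \<sigma> bs where "y \<in> convex hull ((\<lambda>v. axis v 1) ` \<sigma>)" "ordering bs"
      "minlab_eq_basislab w bs" "\<sigma> \<subseteq> assoc_facet bs"
    using assms unfolding realization_def Delta_def ordering_def by blast
  moreover have "convex hull ((\<lambda>v. axis v 1) ` \<sigma>) \<subseteq> convex hull ((\<lambda>v. axis v (1::real)) ` assoc_facet bs)"
    using \<open>\<sigma> \<subseteq> assoc_facet bs\<close> by (intro hull_mono image_mono)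
  ultimately show ?thesis
    using that by blast
qed

lemma facet_hull_subset_realization:
  assumes "ordering bs" "minlab_eq_basislab w bs"
  shows "convex hull ((\<lambda>v. axis v 1) ` assoc_facet bs) \<subseteq> realization (Delta w B)"
proof -
  have "assoc_facet bs \<in> Delta w B"
    using assms unfolding Delta_def ordering_def by blast
  then show ?thesis
    unfolding realization_def by blast
qed

lemma upset_sum_facet_point:
  assumes bs: "ordering bs"
    and l: "\<forall>i\<in>{1..<n}. 0 \<le> l i" "sum l {1..<n} = 1"
    and y: "y = (\<Sum>i\<in>{1..<n}. l i *\<^sub>R axis (pjoin bs i) (1::real))"
  shows "normalized (upset_sum y)" "antitone_along bs (upset_sum y)" "chain_point bs (upset_sum y) = y"
proof -
  let ?t = "upset_sum y"
  have t: "?t $ (bs ! m) = (\<Sum>i\<in>{Suc m..<n}. l i)" if "m < n" for m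
    unfolding y by (rule upset_sum_chain_combination[OF bs that])
  have "0 < n"
    using l(2) by (cases n) auto
  show "antitone_along bs ?t"
    unfolding antitone_along_def using t l(1) by (auto intro!: sum_mono2)
  have "gap bs ?t i = l i" if "i \<in> {1..<n}" for i
  proof -
    have "i - 1 < n" "Suc (i - 1) = i"
      using that by auto
    then show ?thesis
      using t[of "i - 1"] t[of i] that by (simp add: gap_def sum.atLeast_Suc_lessThan)
  qed
  then show "chain_point bs ?t = y"
    unfolding chain_point_def y by (intro sum.cong) auto
  have "?t $ (bs ! 0) = 1" "?t $ (bs ! (n - 1)) = 0"
    using t[of 0] t[of "n - 1"] \<open>0 < n\<close> l(2) by auto
  moreover have "0 \<le> ?t $ b \<and> ?t $ b \<le> 1" if "b \<in> B" for b
  proof -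
    obtain m where "m < n" "b = bs ! m"
      using ordering_obtain_index[OF bs \<open>b \<in> B\<close>] by blast
    moreover have "(\<Sum>i\<in>{Suc m..<n}. l i) \<le> (\<Sum>i\<in>{1..<n}. l i)"
      using l(1) by (intro sum_mono2) auto
    ultimately show ?thesis
      using t l by (auto intro: sum_nonneg)
  qed
  moreover have "bs ! 0 \<in> B" "bs ! (n - 1) \<in> B"
    using ordering_nth_mem[OF bs] \<open>0 < n\<close> by auto
  moreover have "\<forall>v. v \<notin> B \<longrightarrow> ?t $ v = 0"
    by (simp add: upset_sum_def)
  ultimately show "normalized ?t"
    unfolding normalized_def by blast
qed

lemma normalized_antitone_ends:
  assumes "ordering bs" "antitone_along bs t" "normalized t"
  shows "0 < n" "t$(bs ! 0) = 1" "t$(bs ! (n - 1)) = 0"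
proof -
  obtain b1 b0 where b: "b1 \<in> B" "t$b1 = 1" "b0 \<in> B" "t$b0 = 0"
    using assms(3) unfolding normalized_def by blast
  then show "0 < n"
    by (auto simp: card_gt_0_iff)
  obtain m1 m0 where "m1 < n" "b1 = bs ! m1" "m0 < n" "b0 = bs ! m0"
    using ordering_obtain_index[OF assms(1)] b(1,3) by metis
  then have "t$(bs ! m1) \<le> t$(bs ! 0)" "t$(bs ! (n - 1)) \<le> t$(bs ! m0)"
    using assms(2) unfolding antitone_along_def by auto
  moreover have "t$(bs ! 0) \<le> 1" "0 \<le> t$(bs ! (n - 1))"
    using assms(3) ordering_nth_mem[OF assms(1)] \<open>0 < n\<close> unfolding normalized_def by auto
  ultimately show "t$(bs ! 0) = 1" "t$(bs ! (n - 1)) = 0"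
    using b \<open>b1 = bs ! m1\<close> \<open>b0 = bs ! m0\<close> by auto
qed

lemma chain_point_in_facet_hull:
  assumes bs: "ordering bs" "antitone_along bs t" "normalized t"
  shows "upset_sum (chain_point bs t) = t"
    and "chain_point bs t \<in> convex hull ((\<lambda>v. axis v 1) ` assoc_facet bs)"
proof -
  note ends = normalized_antitone_ends[OF bs]
  show "upset_sum (chain_point bs t) = t"
  proof (rule vec_eq_iff[THEN iffD2], intro allI)
    fix b
    show "upset_sum (chain_point bs t) $ b = t $ b"
    proof (cases "b \<in> B")
      case True
      then obtain m where "m < n" "b = bs ! m"
        using ordering_obtain_index[OF bs(1)] by blast
      have "upset_sum (chain_point bs t) $ (bs ! m) = t$(bs ! m) - t$(bs ! (n - 1))"
        unfolding chain_point_def upset_sum_chain_combination[OF bs(1) \<open>m < n\<close>]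
        by (rule sum_gap[OF \<open>m < n\<close>])
      then show ?thesis
        using ends(3) \<open>b = bs ! m\<close> by simp
    qed (use bs(3) in \<open>simp add: upset_sum_def normalized_def\<close>)
  qed
  have "\<forall>i\<in>{1..<n}. 0 \<le> gap bs t i"
    using bs(2) unfolding antitone_along_def gap_def by simp
  moreover have "sum (gap bs t) {1..<n} = 1"
    using sum_gap[of 0 bs t] ends by simp
  ultimately show "chain_point bs t \<in> convex hull ((\<lambda>v. axis v 1) ` assoc_facet bs)"
    unfolding chain_point_def assoc_facet_eq[OF bs(1)]
    by (intro convex_sum convex_convex_hull hull_inc) auto
qed

lemma antitone_take_Min_Max:
  assumes bs: "ordering bs" "antitone_along bs t" and i: "1 \<le> i" "i < n"
  shows "t$(bs ! (i - 1)) = Min ((\<lambda>b. t$b) ` set (take i bs))"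
    and "t$(bs ! i) = Max ((\<lambda>b. t$b) ` (B - set (take i bs)))"
proof -
  have take_iff: "\<And>m. m < n \<Longrightarrow> bs ! m \<in> set (take i bs) \<longleftrightarrow> m < i"
    by (rule ordering_nth_in_take_iff[OF bs(1)])
  show "t$(bs ! (i - 1)) = Min ((\<lambda>b. t$b) ` set (take i bs))"
  proof (rule Min_eqI[symmetric])
    fix x
    assume "x \<in> (\<lambda>b. t$b) ` set (take i bs)"
    then obtain b where b: "b \<in> set (take i bs)" "x = t$b"
      by blast
    then obtain m where "m < n" "b = bs ! m"
      using ordering_obtain_index[OF bs(1)] set_take_ordering_subset[OF bs(1)] by blast
    then have "m < n" "m < i" "x = t$(bs ! m)"
      using b take_iff by auto
    then show "t$(bs ! (i - 1)) \<le> x"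
      using bs(2) i unfolding antitone_along_def by simp
  qed (use take_iff i in auto)
  show "t$(bs ! i) = Max ((\<lambda>b. t$b) ` (B - set (take i bs)))"
  proof (rule Max_eqI[symmetric])
    fix x
    assume "x \<in> (\<lambda>b. t$b) ` (B - set (take i bs))"
    then obtain b where b: "b \<in> B - set (take i bs)" "x = t$b"
      by blast
    then obtain m where "m < n" "b = bs ! m"
      using ordering_obtain_index[OF bs(1)] by blast
    then have "m < n" "\<not> m < i" "x = t$(bs ! m)"
      using b take_iff by auto
    then show "x \<le> t$(bs ! i)"
      using bs(2) unfolding antitone_along_def by simp
  qed (use take_iff i ordering_nth_mem[OF bs(1)] in auto)
qed

lemma gap_eq_if_same_prefix:
  assumes "ordering bs" "antitone_along bs t" "ordering bs'" "antitone_along bs' t"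
    and "1 \<le> i" "i < n" "set (take i bs) = set (take i bs')"
  shows "gap bs t i = gap bs' t i"
  using antitone_take_Min_Max[OF assms(1,2,5,6)] antitone_take_Min_Max[OF assms(3-6)] assms(7)
  unfolding gap_def by simp

lemma antitone_prefix_separated:
  assumes bs: "ordering bs" "antitone_along bs t" and "1 \<le> i" "i < n" "gap bs t i > 0"
    and "b \<in> set (take i bs)" "c \<in> B - set (take i bs)"
  shows "t$c < t$b"
proof -
  have "b \<in> B"
    using assms(6) set_take_ordering_subset[OF bs(1)] by blast
  then obtain j where j: "j < n" "b = bs ! j"
    using ordering_obtain_index[OF bs(1)] by blast
  obtain k where k: "k < n" "c = bs ! k"
    using ordering_obtain_index[OF bs(1)] assms(7) by blast
  have "j < i" "\<not> k < i"
    using assms(6,7) ordering_nth_in_take_iff[OF bs(1)] j k by auto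
  then have "t$c \<le> t$(bs ! i)" "t$(bs ! (i - 1)) \<le> t$b"
    using bs(2) assms(3,4) j k unfolding antitone_along_def by auto
  then show ?thesis
    using assms(5) unfolding gap_def by simp
qed

lemma take_eq_if_separated:
  assumes bs: "ordering bs" "antitone_along bs t"
    and P: "P \<subseteq> B" "card P = i" and sep: "\<And>b c. b \<in> P \<Longrightarrow> c \<in> B - P \<Longrightarrow> t$c < t$b"
  shows "set (take i bs) = P"
proof -
  have "q \<in> P" if q: "q \<in> set (take i bs)" for q
  proof (rule ccontr)
    assume "q \<notin> P"
    have "q \<in> B"
      using q set_take_ordering_subset[OF bs(1)] by blast
    then obtain j where j: "j < n" "q = bs ! j"
      using ordering_obtain_index[OF bs(1)] by blast
    then have "j < i"
      using q ordering_nth_in_take_iff[OF bs(1)] by blast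
    have "P \<subseteq> set (take j bs)"
    proof
      fix p
      assume "p \<in> P"
      then obtain k where k: "k < n" "p = bs ! k"
        using ordering_obtain_index[OF bs(1)] P(1) by blast
      have "t$q < t$p"
        using sep \<open>p \<in> P\<close> \<open>q \<notin> P\<close> q set_take_ordering_subset[OF bs(1)] by blast
      then have "k < j"
        using bs(2) j k unfolding antitone_along_def by (meson not_le_imp_less not_less)
      then show "p \<in> set (take j bs)"
        using ordering_nth_in_take_iff[OF bs(1) k(1)] k(2) by simp
    qed
    then have "card P \<le> j"
      using card_mono[of "set (take j bs)" P] card_length[of "take j bs"] by simp
    then show False
      using P(2) \<open>j < i\<close> by simp
  qed
  moreover have "card (set (take i bs)) = i"
    using bs(1) P card_mono[of B P] length_ordering[OF bs(1)]
    unfolding ordering_def by (simp add: distinct_card)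
  ultimately show ?thesis
    using P(2) by (intro card_subset_eq) auto
qed

lemma chain_point_eq:
  assumes "ordering bs" "antitone_along bs t" "ordering bs'" "antitone_along bs' t"
  shows "chain_point bs t = chain_point bs' t"
proof -
  have same_prefix: "set (take i bs') = set (take i bs)"
    if "ordering bs" "antitone_along bs t" "ordering bs'" "antitone_along bs' t"
      "1 \<le> i" "i < n" "gap bs t i > 0" for bs bs' i
    using that antitone_prefix_separated[OF that(1,2,5-7)] length_ordering[OF that(1)]
      set_take_ordering_subset[OF that(1)] distinct_card[of "take i bs"]
    by (intro take_eq_if_separated[OF that(3,4)]) (auto simp: ordering_def)
  have "gap bs t i *\<^sub>R axis (pjoin bs i) 1 = gap bs' t i *\<^sub>R axis (pjoin bs' i) 1"
    if "1 \<le> i" "i < n" for i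
  proof -
    have "gap bs t i \<ge> 0" "gap bs' t i \<ge> 0"
      using assms(2,4) that unfolding antitone_along_def gap_def by simp_all
    then consider "gap bs t i > 0" | "gap bs' t i > 0" | "gap bs t i = 0" "gap bs' t i = 0"
      by linarith
    then show ?thesis
      using same_prefix[OF assms that] same_prefix[OF assms(3,4,1,2) that]
        gap_eq_if_same_prefix[OF assms that] unfolding pjoin_def by cases auto
  qed
  then show ?thesis
    unfolding chain_point_def by (intro sum.cong) auto
qed

lemma realization_point_representation:
  assumes "y \<in> realization (Delta w B)"
  obtains bs where "ordering bs" "antitone_along bs (upset_sum y)" "chain_point bs (upset_sum y) = y"
    "normalized (upset_sum y)" "admissible (upset_sum y)"
proof -
  obtain bs where bs: "ordering bs" "minlab_eq_basislab w bs"
    "y \<in> convex hull ((\<lambda>v. axis v 1) ` assoc_facet bs)"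
    using obtain_realization_facet[OF assms] by blast
  obtain l where "\<forall>i\<in>{1..<n}. 0 \<le> l i" "sum l {1..<n} = 1"
    "y = (\<Sum>i\<in>{1..<n}. l i *\<^sub>R axis (pjoin bs i) (1::real))"
    using obtain_facet_hull_coefficients[OF bs(1,3)] by blast
  note facet = upset_sum_facet_point[OF bs(1) this]
  then show ?thesis
    using that bs(1) admissible_if_minlab_eq_basislab[OF bs(1,2) facet(2)] by blast
qed

theorem upset_sum_realization:
  "upset_sum ` realization (Delta w B) = {t. normalized t \<and> admissible t}"
proof
  show "upset_sum ` realization (Delta w B) \<subseteq> {t. normalized t \<and> admissible t}"
    using realization_point_representation by blast
  show "{t. normalized t \<and> admissible t} \<subseteq> upset_sum ` realization (Delta w B)"
  proof
    fix t
    assume t: "t \<in> {t. normalized t \<and> admissible t}"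
    obtain bs where bs: "ordering bs" "lex_decreasing_along bs t"
      using exists_lex_decreasing_ordering by blast
    have antitone: "antitone_along bs t"
      using bs(2) by (rule antitone_if_lex_decreasing)
    have "minlab_eq_basislab w bs"
      using minlab_eq_basislab_if_admissible bs t by blast
    then have "chain_point bs t \<in> realization (Delta w B)"
      using chain_point_in_facet_hull(2)[OF bs(1) antitone] facet_hull_subset_realization[OF bs(1)] t
      by blast
    moreover have "upset_sum (chain_point bs t) = t"
      using chain_point_in_facet_hull(1)[OF bs(1) antitone] t by blast
    ultimately show "t \<in> upset_sum ` realization (Delta w B)"
      by (metis image_eqI)
  qed
qed

theorem inj_on_upset_sum: "inj_on upset_sum (realization (Delta w B))"
proof (rule inj_onI)
  fix y y'
  assume "y \<in> realization (Delta w B)" "y' \<in> realization (Delta w B)" "upset_sum y = upset_sum y'"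
  then obtain bs bs' where "ordering bs" "antitone_along bs (upset_sum y)" "chain_point bs (upset_sum y) = y"
      "ordering bs'" "antitone_along bs' (upset_sum y)" "chain_point bs' (upset_sum y) = y'"
    using realization_point_representation by metis
  then show "y = y'"
    using chain_point_eq by metis
qed

definition upper_pairs :: "('a \<times> 'a) set" where
  "upper_pairs = {(e, d). is_atom e \<and> e \<notin> B \<and> d \<in> supp e \<and> w e < w d}"

definition lower_supp :: "'a \<Rightarrow> 'a set" where
  "lower_supp e = {a \<in> supp e. w a < w e}"

definition defect :: "(real, 'a) vec \<Rightarrow> real" where
  "defect u = Max ((\<lambda>(e, d). Min ((\<lambda>a. u$a - u$d) ` lower_supp e)) ` upper_pairs)"

lemma lower_supp_nonempty: "(e, d) \<in> upper_pairs \<Longrightarrow> lower_supp e \<noteq> {}"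
  unfolding upper_pairs_def lower_supp_def using supp_has_lighter_elem by auto

lemma lower_supp_subset: "lower_supp e \<subseteq> B"
  unfolding lower_supp_def using supp_subset by auto

lemma upper_pairs_snd_mem: "(e, d) \<in> upper_pairs \<Longrightarrow> d \<in> B"
  unfolding upper_pairs_def using supp_subset by auto

lemma defect_le_0_iff:
  assumes "upper_pairs \<noteq> {}"
  shows "defect t \<le> 0 \<longleftrightarrow> (\<forall>(e, d)\<in>upper_pairs. \<exists>a\<in>lower_supp e. t$a \<le> t$d)"
proof -
  have "defect t \<le> 0 \<longleftrightarrow> (\<forall>(e, d)\<in>upper_pairs. Min ((\<lambda>a. t$a - t$d) ` lower_supp e) \<le> 0)"
    unfolding defect_def using assms by (simp add: Max_le_iff split_beta)
  also have "\<dots> \<longleftrightarrow> (\<forall>(e, d)\<in>upper_pairs. \<exists>a\<in>lower_supp e. t$a \<le> t$d)"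
    using lower_supp_nonempty by (auto simp: Min_le_iff)
  finally show ?thesis .
qed

lemma lower_supp_le_if_admissible:
  assumes t: "admissible t" and ed: "(e, d) \<in> upper_pairs"
  shows "\<exists>a\<in>lower_supp e. t$a \<le> t$d"
proof -
  have e: "is_atom e" "e \<notin> B" "d \<in> supp e"
    using ed unfolding upper_pairs_def by auto
  obtain b where b: "b \<in> supp e" "w b \<le> w e" "\<forall>b'\<in>supp e. t$b \<le> t$b'"
    using t e(1) unfolding admissible_def by blast
  then have "b \<in> lower_supp e"
    using w_supp_neq[OF e(1,2)] unfolding lower_supp_def by force
  then show ?thesis
    using b(3) e(3) by blast
qed

lemma admissible_if_lower_supp_le:
  assumes lower: "\<And>e d. (e, d) \<in> upper_pairs \<Longrightarrow> \<exists>a\<in>lower_supp e. t$a \<le> t$d"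
  shows "admissible t"
  unfolding admissible_def
proof (intro allI impI)
  fix e :: 'a
  assume e: "is_atom e"
  show "\<exists>b\<in>supp e. w b \<le> w e \<and> (\<forall>b'\<in>supp e. t$b \<le> t$b')"
  proof (cases "e \<in> B")
    case False
    let ?T = "(\<lambda>a. t$a) ` lower_supp e"
    have "lower_supp e \<noteq> {}"
      using supp_has_lighter_elem[OF e False] unfolding lower_supp_def by auto
    then have "Min ?T \<in> ?T"
      by (intro Min_in) auto
    then obtain a where a: "Min ?T = t$a" "a \<in> lower_supp e"
      by (rule imageE)
    have a_min: "t$a \<le> t$a'" if "a' \<in> lower_supp e" for a'
      unfolding a(1)[symmetric] using that by (intro Min_le) auto
    have "t$a \<le> t$b'" if "b' \<in> supp e" for b'
    proof (cases "w b' < w e")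
      case False
      then have "(e, b') \<in> upper_pairs"
        using w_supp_neq[OF e \<open>e \<notin> B\<close> that] that e \<open>e \<notin> B\<close> unfolding upper_pairs_def by simp
      then show ?thesis
        using lower a_min by fastforce
    qed (use a_min that in \<open>simp add: lower_supp_def\<close>)
    then show ?thesis
      using a(2) less_imp_le unfolding lower_supp_def by blast
  qed (simp add: supp_basis_elem)
qed

lemma admissible_iff_defect_le_0:
  assumes "upper_pairs \<noteq> {}"
  shows "admissible t \<longleftrightarrow> defect t \<le> 0"
  unfolding defect_le_0_iff[OF assms]
  using lower_supp_le_if_admissible admissible_if_lower_supp_le by blast

lemma defect_scale:
  assumes "0 \<le> c" "upper_pairs \<noteq> {}"
    and diff: "\<And>a d. a \<in> B \<Longrightarrow> d \<in> B \<Longrightarrow> t$a - t$d = c * (u$a - u$d)"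
  shows "defect t = c * defect u"
proof -
  have "Min ((\<lambda>a. t$a - t$d) ` lower_supp e) = c * Min ((\<lambda>a. u$a - u$d) ` lower_supp e)"
    if "(e, d) \<in> upper_pairs" for e d
  proof -
    have "(\<lambda>a. t$a - t$d) ` lower_supp e = (\<lambda>a. c * (u$a - u$d)) ` lower_supp e"
      using diff lower_supp_subset upper_pairs_snd_mem[OF that] by (intro image_cong) auto
    then show ?thesis
      using Min_image_mult_left[OF assms(1) _ lower_supp_nonempty[OF that]] by simp
  qed
  then have "(\<lambda>(e, d). Min ((\<lambda>a. t$a - t$d) ` lower_supp e)) ` upper_pairs
      = (\<lambda>(e, d). c * Min ((\<lambda>a. u$a - u$d) ` lower_supp e)) ` upper_pairs"
    by (intro image_cong) auto
  then show ?thesis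
    unfolding defect_def using Max_image_mult_left[OF assms(1) _ assms(2)]
    by (simp add: case_prod_beta')
qed

lemma defect_shift_le:
  assumes "0 \<le> s" "upper_pairs \<noteq> {}"
    and diff: "\<And>a d. a \<in> B \<Longrightarrow> d \<in> B \<Longrightarrow> t$a - t$d = (u$a - u$d) + s * (real (w a) - real (w d))"
  shows "defect t \<le> defect u - s"
  unfolding defect_def
proof (rule Max.boundedI)
  fix m
  assume "m \<in> (\<lambda>(e, d). Min ((\<lambda>a. t$a - t$d) ` lower_supp e)) ` upper_pairs"
  then obtain e d where ed: "(e, d) \<in> upper_pairs" "m = Min ((\<lambda>a. t$a - t$d) ` lower_supp e)"
    by auto
  let ?U = "(\<lambda>a. u$a - u$d) ` lower_supp e"
  have "Min ?U \<in> ?U"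
    using lower_supp_nonempty[OF ed(1)] by (intro Min_in) auto
  then obtain a where a: "Min ?U = u$a - u$d" "a \<in> lower_supp e"
    by (rule imageE)
  have "w a < w d"
    using a(2) ed(1) unfolding lower_supp_def upper_pairs_def by auto
  then have "s * (real (w a) - real (w d)) \<le> - s"
    using assms(1) mult_left_mono[of "real (w a) - real (w d)" "-1" s] by simp
  have "m \<le> t$a - t$d"
    unfolding ed(2) using a(2) by (intro Min_le) auto
  also have "\<dots> = (u$a - u$d) + s * (real (w a) - real (w d))"
    using diff a(2) lower_supp_subset upper_pairs_snd_mem[OF ed(1)] by blast
  also have "\<dots> \<le> Min ?U - s"
    using a(1) \<open>s * (real (w a) - real (w d)) \<le> - s\<close> by simp
  also have "Min ?U \<le> Max ((\<lambda>(e, d). Min ((\<lambda>a. u$a - u$d) ` lower_supp e)) ` upper_pairs)"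
    using ed(1) by (intro Max_ge) force+
  finally show "m \<le> Max ((\<lambda>(e, d). Min ((\<lambda>a. u$a - u$d) ` lower_supp e)) ` upper_pairs) - s"
    by simp
qed (use assms(2) in auto)

lemma continuous_on_defect: "upper_pairs \<noteq> {} \<Longrightarrow> continuous_on S defect"
  unfolding defect_def case_prod_beta
  by (intro continuous_on_Max_image continuous_on_Min_image continuous_intros)
    (auto simp: lower_supp_nonempty)

lemma normalized_eq_if_diff_scaled:
  assumes "normalized t" "normalized t'" "0 < c"
    and diff: "\<And>a d. a \<in> B \<Longrightarrow> d \<in> B \<Longrightarrow> t'$a - t'$d = c * (t$a - t$d)"
  shows "t = t'"
proof -
  obtain a d where ad: "a \<in> B" "t$a = 1" "d \<in> B" "t$d = 0"
    using assms(1) unfolding normalized_def by blast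
  obtain a' d' where ad': "a' \<in> B" "t'$a' = 1" "d' \<in> B" "t'$d' = 0"
    using assms(2) unfolding normalized_def by blast
  have range: "\<And>b. b \<in> B \<Longrightarrow> 0 \<le> t$b \<and> t$b \<le> 1" "\<And>b. b \<in> B \<Longrightarrow> 0 \<le> t'$b \<and> t'$b \<le> 1"
    using assms(1,2) unfolding normalized_def by blast+
  have "c \<le> 1"
    using diff[OF ad(1,3)] ad range(2)[OF ad(1)] range(2)[OF ad(3)] by simp
  moreover have "1 \<le> c"
  proof -
    have "1 = c * (t$a' - t$d')"
      using diff[OF ad'(1,3)] ad' by simp
    also have "\<dots> \<le> c * 1"
      using range(1)[OF ad'(1)] range(1)[OF ad'(3)] assms(3) by (intro mult_left_mono) auto
    finally show ?thesis
      by simp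
  qed
  ultimately have "c = 1"
    by simp
  then have "t'$d = 0"
    using diff[OF ad'(3) ad(3)] ad ad' range(1)[OF ad'(3)] range(2)[OF ad(3)] by simp
  then have "t'$b = t$b" if "b \<in> B" for b
    using diff[OF that ad(3)] \<open>c = 1\<close> ad(4) by simp
  then show ?thesis
    using assms(1,2) unfolding normalized_def by (metis vec_eq_iff)
qed

lemma obtain_normalized_rescaling:
  assumes "a \<in> B" "d \<in> B" "u$a \<noteq> u$d"
  obtains t c where "normalized t" "0 < c" "\<And>a d. a \<in> B \<Longrightarrow> d \<in> B \<Longrightarrow> t$a - t$d = c * (u$a - u$d)"
proof -
  define lo where "lo = Min ((\<lambda>b. u$b) ` B)"
  define hi where "hi = Max ((\<lambda>b. u$b) ` B)"
  have range: "lo \<le> u$b" "u$b \<le> hi" if "b \<in> B" for b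
    unfolding lo_def hi_def using that by auto
  have "lo \<in> (\<lambda>b. u$b) ` B" "hi \<in> (\<lambda>b. u$b) ` B"
    unfolding lo_def hi_def using assms(1) by (auto intro!: Min_in Max_in)
  then obtain b_lo b_hi where b: "b_lo \<in> B" "u$b_lo = lo" "b_hi \<in> B" "u$b_hi = hi"
    by (metis imageE)
  have "lo < hi"
    using range[OF assms(1)] range[OF assms(2)] assms(3) by linarith
  define t where "t = (\<chi> i. if i \<in> B then (u$i - lo) / (hi - lo) else 0)"
  have "normalized t"
    unfolding normalized_def t_def using b range \<open>lo < hi\<close> by (auto simp: divide_le_eq_1)
  moreover have "t$a - t$d = (1 / (hi - lo)) * (u$a - u$d)" if "a \<in> B" "d \<in> B" for a d
    unfolding t_def using that by (simp add: diff_divide_distrib)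
  ultimately show ?thesis
    using \<open>lo < hi\<close> by (intro that[of t "1 / (hi - lo)"]) auto
qed

end

section \<open>The homeomorphism onto a ball\<close>

text \<open>b0 and b1 may be any two elements of B; upper_pairs is nonempty because B is not the
  lexicographically first nbc basis (exists_supp_heavier_elem).\<close>

locale nbc_basis_pivots = nbc_basis_setting +
  fixes b0 b1 :: 'a
  assumes b0_mem: "b0 \<in> B" and b1_mem: "b1 \<in> B" and w_b0_less: "w b0 < w b1"
    and upper_pairs_nonempty: "upper_pairs \<noteq> {}"
begin

definition free_coords :: "'a set" where
  "free_coords = B - {b0, b1}"

definition slope :: "(real, 'a) vec \<Rightarrow> real" where
  "slope u = (u$b1 - u$b0) / (real (w b1) - real (w b0))"

text \<open>reduce kills exactly the constants and the weight vector on B (reduce_eq_imp_shift) and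
  is the identity on vectors supported on free_coords.\<close>

definition reduce :: "(real, 'a) vec \<Rightarrow> (real, 'a) vec" where
  "reduce u = (\<chi> v. if v \<in> free_coords then (u$v - u$b0) - slope u * (real (w v) - real (w b0)) else 0)"

definition free_subspace :: "(real, 'a) vec set" where
  "free_subspace = {x. \<forall>i. i \<notin> free_coords \<longrightarrow> x$i = 0}"

definition radius :: "(real, 'a) vec \<Rightarrow> real" where
  "radius u = sqrt ((norm (reduce u))\<^sup>2 + (defect u)\<^sup>2)"

definition to_ball :: "(real, 'a) vec \<Rightarrow> (real, 'a) vec" where
  "to_ball u = (1 / radius u) *\<^sub>R reduce u"

lemma free_coords_subset: "free_coords \<subseteq> B"
  unfolding free_coords_def by blast

lemma card_free_coords: "card free_coords = n - 2"
proof -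
  have "card {b0, b1} = 2"
    using w_b0_less by (auto simp: card_insert_if)
  then show ?thesis
    unfolding free_coords_def using b0_mem b1_mem by (simp add: card_Diff_subset)
qed

lemma reduce_scale:
  assumes "\<And>a d. a \<in> B \<Longrightarrow> d \<in> B \<Longrightarrow> t$a - t$d = c * (u$a - u$d)"
  shows "reduce t = c *\<^sub>R reduce u"
proof -
  have "slope t = c * slope u"
    unfolding slope_def using assms[OF b1_mem b0_mem] by simp
  then show ?thesis
    unfolding reduce_def using assms b0_mem free_coords_subset
    by (auto simp: vec_eq_iff algebra_simps)
qed

lemma reduce_shift:
  assumes "\<And>a d. a \<in> B \<Longrightarrow> d \<in> B \<Longrightarrow> t$a - t$d = (u$a - u$d) + s * (real (w a) - real (w d))"
  shows "reduce t = reduce u"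
proof -
  have "slope t = slope u + s"
    unfolding slope_def using assms[OF b1_mem b0_mem] w_b0_less by (simp add: field_simps)
  then show ?thesis
    unfolding reduce_def using assms b0_mem free_coords_subset
    by (auto simp: vec_eq_iff algebra_simps)
qed

lemma reduce_eq_imp_shift:
  assumes "reduce u = reduce u'"
  obtains s where "\<And>a d. a \<in> B \<Longrightarrow> d \<in> B \<Longrightarrow> u'$a - u'$d = (u$a - u$d) + s * (real (w a) - real (w d))"
proof -
  define s where "s = slope u' - slope u"
  define k where "k = (u'$b0 - u$b0) - s * real (w b0)"
  have "u'$b = u$b + s * real (w b) + k" if b: "b \<in> B" for b
  proof -
    consider "b \<in> free_coords" | "b = b0" | "b = b1"
      using b unfolding free_coords_def by blast
    then show ?thesis
    proof cases
      case 1
      then have "(u$b - u$b0) - slope u * (real (w b) - real (w b0))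
          = (u'$b - u'$b0) - slope u' * (real (w b) - real (w b0))"
        using arg_cong[OF assms, of "\<lambda>x. x $ b"] unfolding reduce_def by simp
      then show ?thesis
        unfolding k_def s_def by (simp add: algebra_simps)
    next
      case 3
      have "slope u * (real (w b1) - real (w b0)) = u$b1 - u$b0"
        "slope u' * (real (w b1) - real (w b0)) = u'$b1 - u'$b0"
        unfolding slope_def using w_b0_less by auto
      then show ?thesis
        using 3 unfolding k_def s_def by (simp add: algebra_simps)
    qed (simp add: k_def)
  qed
  then show ?thesis
    using that[of s] by (simp add: algebra_simps)
qed

lemma reduce_eq_self: "(\<And>i. i \<notin> free_coords \<Longrightarrow> v$i = 0) \<Longrightarrow> reduce v = v"
  using b0_mem b1_mem unfolding reduce_def slope_def free_coords_def by (auto simp: vec_eq_iff)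

lemma reduce_outside_free_coords: "i \<notin> free_coords \<Longrightarrow> reduce u $ i = 0"
  unfolding reduce_def by simp

lemma continuous_on_reduce: "continuous_on S reduce"
  unfolding reduce_def slope_def
proof (rule continuous_on_vec_lambda)
  fix v
  show "continuous_on S (\<lambda>x. if v \<in> free_coords
      then x$v - x$b0 - (x$b1 - x$b0) / (real (w b1) - real (w b0)) * (real (w v) - real (w b0))
      else 0)"
    using w_b0_less by (cases "v \<in> free_coords") (auto intro!: continuous_intros)
qed

lemma defect_reduce_zero_if_constant:
  assumes "\<And>a d. a \<in> B \<Longrightarrow> d \<in> B \<Longrightarrow> u$a = u$d"
  shows "defect u = 0" "reduce u = 0"
proof -
  have diff: "u$a - u$d = 0 * (u$a - u$d)" if "a \<in> B" "d \<in> B" for a d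
    using assms[OF that] by simp
  show "defect u = 0"
    using defect_scale[OF order.refl upper_pairs_nonempty diff] by simp
  show "reduce u = 0"
    using reduce_scale[OF diff] by simp
qed

lemma shift_eq_0_if_defect_eq:
  assumes "\<And>a d. a \<in> B \<Longrightarrow> d \<in> B \<Longrightarrow> t$a - t$d = (u$a - u$d) + s * (real (w a) - real (w d))"
    and "defect t = defect u"
  shows "s = 0"
proof (rule ccontr)
  assume "s \<noteq> 0"
  then consider "0 < s" | "s < 0"
    by linarith
  then show False
  proof cases
    case 1
    then show False
      using defect_shift_le[OF _ upper_pairs_nonempty assms(1)] assms(2) by simp
  next
    case 2
    have "u$a - u$d = (t$a - t$d) + (- s) * (real (w a) - real (w d))" if "a \<in> B" "d \<in> B" for a d
      using assms(1)[OF that] by (simp add: algebra_simps)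
    then show False
      using defect_shift_le[OF _ upper_pairs_nonempty, of "- s" u t] assms(2) 2 by simp
  qed
qed

lemma radius_pos:
  assumes "normalized t" "admissible t"
  shows "0 < radius t"
proof (rule ccontr)
  assume "\<not> 0 < radius t"
  then have "(norm (reduce t))\<^sup>2 + (defect t)\<^sup>2 = 0"
    unfolding radius_def by (smt (verit) real_sqrt_gt_zero sum_power2_ge_zero)
  then have "reduce 0 = reduce t" "defect t = defect 0"
    using defect_reduce_zero_if_constant[of 0] by (simp_all add: add_nonneg_eq_0_iff)
  then obtain s where s: "\<And>a d. a \<in> B \<Longrightarrow> d \<in> B \<Longrightarrow> t$a - t$d = s * (real (w a) - real (w d))"
    using reduce_eq_imp_shift[of 0 t] by auto
  have "s = 0"
    using shift_eq_0_if_defect_eq[of t 0 s] s \<open>defect t = defect 0\<close> by simp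
  obtain a d where "a \<in> B" "t$a = 1" "d \<in> B" "t$d = 0"
    using assms(1) unfolding normalized_def by blast
  then show False
    using s[of a d] \<open>s = 0\<close> by simp
qed

lemma to_ball_mem:
  assumes "normalized t" "admissible t"
  shows "to_ball t \<in> cball 0 1 \<inter> free_subspace"
proof -
  have "norm (to_ball t) = norm (reduce t) / radius t"
    unfolding to_ball_def using radius_pos[OF assms] by simp
  also have "\<dots> \<le> 1"
    using radius_pos[OF assms] real_le_rsqrt[of "norm (reduce t)"] unfolding radius_def by simp
  finally show ?thesis
    unfolding to_ball_def free_subspace_def by (simp add: reduce_outside_free_coords)
qed

lemma inj_on_to_ball: "inj_on to_ball {t. normalized t \<and> admissible t}"
proof (rule inj_onI)
  fix t t'
  assume t: "t \<in> {t. normalized t \<and> admissible t}" and t': "t' \<in> {t. normalized t \<and> admissible t}"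
    and "to_ball t = to_ball t'"
  define c where "c = radius t' / radius t"
  have "0 < c"
    unfolding c_def using radius_pos t t' by simp
  have "reduce t' = c *\<^sub>R reduce t" "defect t' = c * defect t"
    using radial_projection_eq_imp_proportional[of "defect t" "defect t'" "radius t" "radius t'"]
      \<open>to_ball t = to_ball t'\<close> radius_pos t t' admissible_iff_defect_le_0[OF upper_pairs_nonempty]
    unfolding c_def to_ball_def radius_def by auto
  define u where "u = c *\<^sub>R t"
  have diff_u: "u$a - u$d = c * (t$a - t$d)" for a d
    unfolding u_def by (simp add: algebra_simps)
  have "reduce u = reduce t'" "defect u = defect t'"
    using reduce_scale[of u c t] defect_scale[OF _ upper_pairs_nonempty, of c u t] diff_u \<open>0 < c\<close>
      \<open>reduce t' = c *\<^sub>R reduce t\<close> \<open>defect t' = c * defect t\<close> by simp_all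
  then obtain s where s: "\<And>a d. a \<in> B \<Longrightarrow> d \<in> B \<Longrightarrow> t'$a - t'$d = (u$a - u$d) + s * (real (w a) - real (w d))"
    using reduce_eq_imp_shift by metis
  then have "s = 0"
    using shift_eq_0_if_defect_eq \<open>defect u = defect t'\<close> by metis
  then show "t = t'"
    using normalized_eq_if_diff_scaled[of t t' c] s diff_u t t' \<open>0 < c\<close> by simp
qed

lemma exists_weight_shift_with_defect: "\<exists>s. defect (u + s *\<^sub>R (\<chi> i. real (w i))) = y"
proof -
  define g where "g s = defect (u + s *\<^sub>R (\<chi> i. real (w i)))" for s
  define M where "M = \<bar>defect u - y\<bar>"
  have diff: "(u + s *\<^sub>R (\<chi> i. real (w i)))$a - (u + s *\<^sub>R (\<chi> i. real (w i)))$d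
      = (u$a - u$d) + s * (real (w a) - real (w d))" for s a d
    by (simp add: algebra_simps)
  have "g M \<le> defect u - M"
    unfolding g_def using defect_shift_le[OF _ upper_pairs_nonempty diff] M_def by simp
  moreover have "defect u \<le> g (- M) - M"
    unfolding g_def using defect_shift_le[OF _ upper_pairs_nonempty, of M u] diff[of "- M"] M_def
    by (simp add: algebra_simps)
  moreover have "continuous_on {- M..M} g"
    unfolding g_def
    by (intro continuous_on_compose2[OF continuous_on_defect[OF upper_pairs_nonempty]] continuous_intros) auto
  ultimately obtain s where "g s = y"
    using IVT2'[of g M y "- M"] M_def by force
  then show ?thesis
    unfolding g_def by blast
qed

lemma obtain_reduce_defect_eq:
  assumes "v \<in> free_subspace"
  obtains u where "reduce u = v" "defect u = y"
proof -
  obtain s where "defect (v + s *\<^sub>R (\<chi> i. real (w i))) = y"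
    using exists_weight_shift_with_defect by blast
  moreover have "reduce (v + s *\<^sub>R (\<chi> i. real (w i))) = v"
    using reduce_shift[of "v + s *\<^sub>R (\<chi> i. real (w i))" v s] reduce_eq_self[of v] assms
    unfolding free_subspace_def by (simp add: algebra_simps)
  ultimately show ?thesis
    using that by blast
qed

lemma to_ball_surj:
  assumes "v \<in> cball 0 1 \<inter> free_subspace"
  shows "\<exists>t. normalized t \<and> admissible t \<and> to_ball t = v"
proof -
  define \<beta> where "\<beta> = sqrt (1 - (norm v)\<^sup>2)"
  have "(norm v)\<^sup>2 \<le> 1"
    using assms by (simp add: abs_square_le_1)
  then have "0 \<le> \<beta>" "\<beta>\<^sup>2 = 1 - (norm v)\<^sup>2"
    unfolding \<beta>_def by simp_all
  obtain u where u: "reduce u = v" "defect u = - \<beta>"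
    using obtain_reduce_defect_eq assms by blast
  then have "radius u = 1"
    unfolding radius_def using \<open>\<beta>\<^sup>2 = 1 - (norm v)\<^sup>2\<close> by simp
  have "\<not> (\<forall>a\<in>B. \<forall>d\<in>B. u$a = u$d)"
  proof
    assume "\<forall>a\<in>B. \<forall>d\<in>B. u$a = u$d"
    then have "defect u = 0" "reduce u = 0"
      using defect_reduce_zero_if_constant[of u] by blast+
    then show False
      using \<open>radius u = 1\<close> unfolding radius_def by simp
  qed
  then obtain t c where t: "normalized t" "0 < c"
    and diff: "\<And>a d. a \<in> B \<Longrightarrow> d \<in> B \<Longrightarrow> t$a - t$d = c * (u$a - u$d)"
    using obtain_normalized_rescaling by metis
  have "reduce t = c *\<^sub>R v" "defect t = - (c * \<beta>)"
    using reduce_scale[OF diff] defect_scale[OF _ upper_pairs_nonempty diff] t(2) u by simp_all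
  moreover have "admissible t"
    using admissible_iff_defect_le_0[OF upper_pairs_nonempty] calculation t(2) \<open>0 \<le> \<beta>\<close> by simp
  moreover have "(norm (reduce t))\<^sup>2 + (defect t)\<^sup>2 = c\<^sup>2 * ((norm v)\<^sup>2 + \<beta>\<^sup>2)"
    unfolding calculation by (simp add: power_mult_distrib algebra_simps)
  then have "radius t = c"
    unfolding radius_def using t(2) \<open>\<beta>\<^sup>2 = 1 - (norm v)\<^sup>2\<close> by simp
  ultimately show ?thesis
    unfolding to_ball_def using t by auto
qed

lemma subspace_free_subspace: "subspace free_subspace"
proof -
  have "vec.subspace free_subspace"
    unfolding free_subspace_def by (rule subspace_substandard_cart)
  then show ?thesis
    by (simp add: subspace_vec_eq)
qed

lemma dim_free_subspace: "dim free_subspace = n - 2"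
proof -
  have "vec.dim free_subspace = card free_coords"
    unfolding free_subspace_def by (rule dim_substandard_cart)
  then show ?thesis
    using card_free_coords by (simp add: dim_vec_eq)
qed

lemma continuous_on_to_ball: "continuous_on {t. normalized t \<and> admissible t} to_ball"
proof -
  have "continuous_on {t. normalized t \<and> admissible t} radius"
    unfolding radius_def
    by (intro continuous_intros continuous_on_reduce continuous_on_defect[OF upper_pairs_nonempty])
  then show ?thesis
    unfolding to_ball_def using radius_pos
    by (intro continuous_intros continuous_on_reduce) (auto simp: less_le)
qed

lemma continuous_on_upset_sum: "continuous_on S upset_sum"
  unfolding upset_sum_def
proof (rule continuous_on_vec_lambda)
  fix b
  show "continuous_on S (\<lambda>y. if b \<in> B then \<Sum>v\<in>{v. b \<le> v}. y$v else 0)"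
    by (cases "b \<in> B") (auto intro!: continuous_intros)
qed

theorem realization_homeomorphic_ball: "realization (Delta w B) homeomorphic (cball 0 1 \<inter> free_subspace)"
proof (rule homeomorphic_compact)
  show "compact (realization (Delta w B))"
    unfolding realization_def by (intro compact_UN finite_imp_compact compact_convex_hull) auto
  show "continuous_on (realization (Delta w B)) (to_ball \<circ> upset_sum)"
    using continuous_on_upset_sum continuous_on_to_ball upset_sum_realization
    by (metis continuous_on_compose)
  have "(to_ball \<circ> upset_sum) ` realization (Delta w B) = to_ball ` {t. normalized t \<and> admissible t}"
    unfolding image_comp[symmetric] upset_sum_realization ..
  also have "\<dots> = cball 0 1 \<inter> free_subspace"
    using to_ball_mem to_ball_surj by blast
  finally show "(to_ball \<circ> upset_sum) ` realization (Delta w B) = cball 0 1 \<inter> free_subspace" .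
  show "inj_on (to_ball \<circ> upset_sum) (realization (Delta w B))"
    using inj_on_upset_sum inj_on_to_ball upset_sum_realization by (simp add: comp_inj_on)
qed

end

theorem proposition4p4:
  fixes w :: "'a::{finite,complete_lattice} \<Rightarrow> nat"
    and r :: nat
    and B :: "'a::{finite,complete_lattice} set"
  assumes "geometric_lattice TYPE('a::{finite,complete_lattice})"
    and "lrank (top::'a::{finite,complete_lattice}) = r + 1"
    and "inj_on w {a. is_atom a}"
    and "nbc_basis w B"
    and "\<exists>B'. nbc_basis w B' \<and> lex_less w B' B"
  shows "\<exists>S :: (real ^ 'a::{finite,complete_lattice}) set. subspace S \<and> dim S = r - 1
           \<and> realization (Delta w B) homeomorphic (cball 0 1 \<inter> S)"
proof -
  interpret nbc_basis_setting w B
    using assms(1,3,4) by unfold_locales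
  obtain e d where e: "is_atom e" "e \<notin> B" and d: "d \<in> supp e" "w e < w d"
    using exists_supp_heavier_elem[OF assms(5)] by blast
  obtain a where a: "a \<in> supp e" "w a < w e"
    using supp_has_lighter_elem[OF e] by blast
  interpret nbc_basis_pivots w B a d
    using a d e supp_subset by unfold_locales (auto simp: upper_pairs_def)
  have "n = r + 1"
    using basis assms(2) unfolding is_basis_def by simp
  then show ?thesis
    using subspace_free_subspace dim_free_subspace realization_homeomorphic_ball by auto
qed

end
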